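(* Let $r>0$, let $m$ be a hyperbolic line in $\mathbb{H}^2$, and let $H$ be one of the two connected components of the set of points at hyperbolic distance exactly $r$ from $m$ (a hypercycle with axis $m$). Let $b,b'$ be points on $m$ with $d(b,b')=\tanh r$, and let $a,a'\in H$ be the points such that the segments $ba$ and $b'a'$ are perpendicular to $m$. Let the box be the closed region bounded by the segments $ab$, $bb'$, $b'a'$ and the arc of $H$ between $a'$ and $a$. Then the box has hyperbolic diameter at most $2r$.
   Context: $\mathbb{H}^2$ is the hyperbolic plane of Gaussian curvature $-1$ with hyperbolic distance $d$. *)

theory Defs
  imports "HOL-Analysis.Analysis"
begin

text \<open>Model of the hyperbolic plane H^2 (curvature -1): the upper half-plane.\<close>

definition UHP :: "complex set" where
  "UHP = {z. Im z > 0}"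

definition hdist :: "complex \<Rightarrow> complex \<Rightarrow> real" where
  "hdist z w = arcosh (1 + (cmod (z - w))^2 / (2 * Im z * Im w))"

definition geodesic_line :: "(real \<Rightarrow> complex) \<Rightarrow> bool" where
  "geodesic_line \<gamma> \<longleftrightarrow> range \<gamma> \<subseteq> UHP \<and> (\<forall>s t. hdist (\<gamma> s) (\<gamma> t) = \<bar>s - t\<bar>)"

definition hdist_set :: "complex \<Rightarrow> complex set \<Rightarrow> real" where
  "hdist_set p S = Inf ((\<lambda>q. hdist p q) ` S)"

definition hypercycle :: "(real \<Rightarrow> complex) \<Rightarrow> real \<Rightarrow> complex set \<Rightarrow> bool" where
  "hypercycle \<gamma> r H \<longleftrightarrow> H \<in> components {p \<in> UHP. hdist_set p (range \<gamma>) = r}"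

definition hsegment :: "complex \<Rightarrow> complex \<Rightarrow> complex set" where
  "hsegment x y = {z \<in> UHP. hdist x z + hdist z y = hdist x y}"

text \<open>Angles in the upper half-plane model are Euclidean angles (conformality),
  so perpendicularity is orthogonality of the tangent vectors.\<close>
definition perp_segment :: "complex \<Rightarrow> complex \<Rightarrow> (real \<Rightarrow> complex) \<Rightarrow> bool" where
  "perp_segment b a \<gamma> \<longleftrightarrow>
     (\<exists>\<sigma> t0 u v. hdist b a > 0 \<and>
        \<sigma> ` {0..hdist b a} \<subseteq> UHP \<and>
        (\<forall>s\<in>{0..hdist b a}. \<forall>t\<in>{0..hdist b a}. hdist (\<sigma> s) (\<sigma> t) = \<bar>s - t\<bar>) \<and>
        \<sigma> 0 = b \<and> \<sigma> (hdist b a) = a \<and> \<gamma> t0 = b \<and>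
        (\<sigma> has_vector_derivative u) (at 0 within {0..hdist b a}) \<and>
        (\<gamma> has_vector_derivative v) (at t0) \<and>
        Re (u * cnj v) = 0)"

definition curve_arc :: "complex set \<Rightarrow> complex \<Rightarrow> complex \<Rightarrow> complex set" where
  "curve_arc H x y = \<Inter>{C. C \<subseteq> H \<and> connected C \<and> x \<in> C \<and> y \<in> C}"

definition hbounded :: "complex set \<Rightarrow> bool" where
  "hbounded S \<longleftrightarrow> (\<exists>c\<in>UHP. \<exists>R. \<forall>z\<in>S. hdist c z \<le> R)"

definition region_bounded_by :: "complex set \<Rightarrow> complex set" where
  "region_bounded_by J = J \<union> \<Union>{C \<in> components (UHP - J). hbounded C}"

definition hbox :: "complex \<Rightarrow> complex \<Rightarrow> complex \<Rightarrow> complex \<Rightarrow> complex set \<Rightarrow> complex set" where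
  "hbox a b b' a' H = region_bounded_by
     (hsegment a b \<union> hsegment b b' \<union> hsegment b' a' \<union> curve_arc H a' a)"

end

theory Submission
  imports Defs
begin

text \<open>
  A real Moebius map sends the axis of the hypercycle to the positive imaginary axis and the
  foot b to \<open>\<i>\<close>. In these coordinates the hypercycle is a Euclidean ray
  \<open>Re w = \<sigma> sinh r Im w\<close>, the perpendiculars at b and b' are arcs of the circles
  \<open>|w| = 1\<close> and \<open>|w| = exp \<tau>\<close> with \<open>|\<tau>| = tanh r\<close>, and the box lies in the sector of the annulus
  between these circles bounded by the axis and the ray. For two points of this sector,
  \<open>cosh d = ch q\<^sub>1 q\<^sub>2 - p\<^sub>1 p\<^sub>2\<close>, where \<open>p\<^sub>i \<in> [0, sinh r]\<close> measure the angles to the axis,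
  \<open>q\<^sub>i = sqrt (1 + p\<^sub>i\<^sup>2)\<close> and \<open>ch \<le> cosh (tanh r)\<close> comes from the ratio of the moduli.
  Bounding \<open>q\<^sub>i\<close> by its chord makes the right-hand side affine in each \<open>p\<^sub>i\<close>, and checking the
  corners gives \<open>cosh d \<le> 2 cosh\<^sup>2 r - 1 = cosh (2 r)\<close>.
\<close>

section \<open>Real Moebius transformations\<close>

abbreviation real_moebius :: "real \<Rightarrow> real \<Rightarrow> real \<Rightarrow> real \<Rightarrow> complex \<Rightarrow> complex" where
  "real_moebius p q s t \<equiv> moebius (of_real p) (of_real q) (of_real s) (of_real t)"

lemma mem_UHP_iff: "z \<in> UHP \<longleftrightarrow> Im z > 0"
  by (simp add: UHP_def)

lemma real_moebius_denom_nonzero: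
  assumes "Im z > 0" "p * t - q * s \<noteq> 0"
  shows "of_real s * z + of_real t \<noteq> 0"
proof
  assume h: "of_real s * z + of_real t = 0"
  hence "Im (of_real s * z + of_real t) = 0" "Re (of_real s * z + of_real t) = 0" by simp_all
  hence "s * Im z = 0" "s * Re z + t = 0" by simp_all
  hence "s = 0" "t = 0" using assms(1) by auto
  thus False using assms(2) by simp
qed

lemma Im_real_moebius:
  assumes "Im z > 0" "p * t - q * s \<noteq> 0"
  shows "Im (real_moebius p q s t z) = (p * t - q * s) * Im z / (cmod (of_real s * z + of_real t))^2"
proof -
  have "(cmod (of_real s * z + of_real t))^2 = (s * Re z + t)^2 + (s * Im z)^2"
    by (simp add: cmod_power2)
  thus ?thesis unfolding moebius_def
    by (simp add: Im_divide power2_eq_square algebra_simps)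
qed

lemma real_moebius_in_UHP:
  assumes "z \<in> UHP" "p * t - q * s > 0"
  shows "real_moebius p q s t z \<in> UHP"
proof -
  have "Im z > 0" using assms by (simp add: mem_UHP_iff)
  moreover have "cmod (of_real s * z + of_real t) > 0"
    using real_moebius_denom_nonzero[OF \<open>Im z > 0\<close>, of p t q s] assms by simp
  ultimately show ?thesis using Im_real_moebius[of z p t q s] assms by (simp add: mem_UHP_iff)
qed

lemma real_moebius_diff:
  assumes "Im z > 0" "Im w > 0" "p * t - q * s \<noteq> 0"
  shows "real_moebius p q s t z - real_moebius p q s t w =
     of_real (p * t - q * s) * (z - w) / ((of_real s * z + of_real t) * (of_real s * w + of_real t))"
  using real_moebius_denom_nonzero[OF assms(1,3)] real_moebius_denom_nonzero[OF assms(2,3)]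
  unfolding moebius_def by (simp add: field_simps)

lemma hdist_real_moebius:
  assumes "z \<in> UHP" "w \<in> UHP" "p * t - q * s > 0"
  shows "hdist (real_moebius p q s t z) (real_moebius p q s t w) = hdist z w"
proof -
  have z: "Im z > 0" and w: "Im w > 0" using assms by (auto simp: mem_UHP_iff)
  define A where "A = cmod (of_real s * z + of_real t)"
  define B where "B = cmod (of_real s * w + of_real t)"
  define D where "D = p * t - q * s"
  have A: "A > 0" using real_moebius_denom_nonzero[OF z, of p t q s] assms unfolding A_def by simp
  have B: "B > 0" using real_moebius_denom_nonzero[OF w, of p t q s] assms unfolding B_def by simp
  have D: "D > 0" using assms D_def by simp
  have "(cmod (real_moebius p q s t z - real_moebius p q s t w))^2 = D^2 * (cmod (z - w))^2 / (A^2 * B^2)"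
    unfolding real_moebius_diff[OF z w, of p t q s, OF D[unfolded D_def, THEN less_imp_neq, symmetric]]
    unfolding norm_divide norm_mult norm_of_real
    using D by (simp add: A_def B_def D_def power_mult_distrib power_divide)
  moreover have "Im (real_moebius p q s t z) = D * Im z / A^2" "Im (real_moebius p q s t w) = D * Im w / B^2"
    using Im_real_moebius[OF z, of p t q s] Im_real_moebius[OF w, of p t q s] D
    unfolding A_def B_def D_def by auto
  ultimately have "(cmod (real_moebius p q s t z - real_moebius p q s t w))^2
        / (2 * Im (real_moebius p q s t z) * Im (real_moebius p q s t w))
      = (D^2 * (cmod (z - w))^2 / (A^2 * B^2)) / (2 * (D * Im z / A^2) * (D * Im w / B^2))"
    by simp
  also have "\<dots> = (cmod (z - w))^2 / (2 * Im z * Im w)"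
    using A B D z w by (simp add: field_simps power2_eq_square)
  finally show ?thesis unfolding hdist_def by simp
qed

lemma real_moebius_compose:
  assumes "Im z > 0" "p' * t' - q' * s' \<noteq> 0"
  shows "real_moebius p q s t (real_moebius p' q' s' t' z) =
    real_moebius (p * p' + q * s') (p * q' + q * t') (s * p' + t * s') (s * q' + t * t') z"
proof -
  define N where "N = of_real p' * z + of_real q'"
  define Dn where "Dn = of_real s' * z + of_real t'"
  have nz: "Dn \<noteq> 0" using real_moebius_denom_nonzero[OF assms] unfolding Dn_def .
  have "real_moebius p q s t (N / Dn)
      = (Dn * (of_real p * N + of_real q * Dn)) / (Dn * (of_real s * N + of_real t * Dn))"
    unfolding moebius_def using nz by (simp add: field_simps)
  also have "\<dots> = (of_real p * N + of_real q * Dn) / (of_real s * N + of_real t * Dn)"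
    using nz by simp
  also have "\<dots> = real_moebius (p * p' + q * s') (p * q' + q * t') (s * p' + t * s') (s * q' + t * t') z"
    unfolding moebius_def N_def Dn_def by (simp add: algebra_simps)
  finally show ?thesis unfolding moebius_def N_def Dn_def .
qed

lemma real_moebius_left_inverse:
  assumes "Im z > 0" "p * t - q * s \<noteq> 0"
  shows "real_moebius t (-q) (-s) p (real_moebius p q s t z) = z"
proof -
  have "of_real p * of_real t \<noteq> (of_real q * of_real s :: complex)"
    using assms(2) by (metis eq_iff_diff_eq_0 of_real_eq_iff of_real_mult)
  with moebius_inverse[OF this real_moebius_denom_nonzero[OF assms]] show ?thesis by simp
qed

lemma real_moebius_right_inverse:
  assumes "Im z > 0" "p * t - q * s \<noteq> 0"
  shows "real_moebius p q s t (real_moebius t (-q) (-s) p z) = z"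
  using real_moebius_left_inverse[of z t p "-q" "-s"] assms by (simp add: mult.commute)

lemma continuous_on_real_moebius: "p * t - q * s \<noteq> 0 \<Longrightarrow> continuous_on UHP (real_moebius p q s t)"
  unfolding moebius_def using real_moebius_denom_nonzero[of _ p t q s]
  by (intro continuous_intros) (auto simp: mem_UHP_iff)

lemma real_moebius_has_field_derivative:
  assumes "Im z > 0" "p * t - q * s \<noteq> 0"
  shows "(real_moebius p q s t has_field_derivative
      of_real (p * t - q * s) / (of_real s * z + of_real t)^2) (at z)"
proof -
  have nz: "of_real s * z + of_real t \<noteq> 0" using real_moebius_denom_nonzero[OF assms] .
  have d1: "((\<lambda>z. of_real p * z + of_real q) has_field_derivative of_real p) (at z)"
    by (auto intro!: derivative_eq_intros)
  have d2: "((\<lambda>z. of_real s * z + of_real t) has_field_derivative of_real s) (at z)"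
    by (auto intro!: derivative_eq_intros)
  have "(of_real p * (of_real s * z + of_real t) - (of_real p * z + of_real q) * of_real s)
       / ((of_real s * z + of_real t) * (of_real s * z + of_real t))
     = of_real (p * t - q * s) / (of_real s * z + of_real t)^2"
    by (simp add: power2_eq_square algebra_simps)
  with DERIV_divide[OF d1 d2 nz] show ?thesis unfolding moebius_def by simp
qed

section \<open>The hyperbolic distance\<close>

lemma hdist_commute: "hdist z w = hdist w z"
  unfolding hdist_def by (simp add: norm_minus_commute mult.commute mult.left_commute)

lemma cosh_hdist:
  assumes "z \<in> UHP" "w \<in> UHP"
  shows "cosh (hdist z w) = 1 + (cmod (z - w))^2 / (2 * Im z * Im w)"
  using assms unfolding hdist_def by (simp add: mem_UHP_iff)

lemma hdist_nonneg: "z \<in> UHP \<Longrightarrow> w \<in> UHP \<Longrightarrow> hdist z w \<ge> 0"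
  unfolding hdist_def by (simp add: mem_UHP_iff)

lemma hdist_eq_abs_if_cosh_eq:
  assumes "z \<in> UHP" "w \<in> UHP" "cosh (hdist z w) = cosh d"
  shows "hdist z w = \<bar>d\<bar>"
  using assms hdist_nonneg[OF assms(1,2)] by simp

lemma hdist_le_if_cosh_le:
  assumes "z \<in> UHP" "w \<in> UHP" "cosh (hdist z w) \<le> cosh d" "d \<ge> 0"
  shows "hdist z w \<le> d"
  using assms hdist_nonneg[OF assms(1,2)] cosh_real_nonneg_le_iff by blast

lemma cosh_real_exp: "cosh (x::real) = (exp x + inverse (exp x)) / 2"
  by (simp add: cosh_def exp_minus)

lemma sinh_real_exp: "sinh (x::real) = (exp x - inverse (exp x)) / 2"
  by (simp add: sinh_def exp_minus)

lemma imag_exp_in_UHP: "\<i> * of_real (exp a) \<in> UHP"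
  by (simp add: mem_UHP_iff)

lemma hdist_imag_exp: "hdist (\<i> * of_real (exp a)) (\<i> * of_real (exp b)) = \<bar>a - b\<bar>"
proof (rule hdist_eq_abs_if_cosh_eq[OF imag_exp_in_UHP imag_exp_in_UHP])
  have "\<i> * of_real (exp a) - \<i> * of_real (exp b) = \<i> * of_real (exp a - exp b)"
    by (simp add: algebra_simps)
  hence "cmod (\<i> * of_real (exp a) - \<i> * of_real (exp b)) = \<bar>exp a - exp b\<bar>"
    by (simp only: norm_mult norm_ii norm_of_real) simp
  hence "cosh (hdist (\<i> * of_real (exp a)) (\<i> * of_real (exp b))) = 1 + (exp a - exp b)^2 / (2 * exp a * exp b)"
    by (simp add: cosh_hdist[OF imag_exp_in_UHP imag_exp_in_UHP])
  also have "\<dots> = cosh (a - b)"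
    by (simp add: cosh_real_exp exp_diff field_simps power2_eq_square)
  finally show "cosh (hdist (\<i> * of_real (exp a)) (\<i> * of_real (exp b))) = cosh (a - b)" .
qed

section \<open>Normalizing points and lines\<close>

text \<open>Eliminating \<open>|z|\<^sup>2\<close> between the two distance equations leaves
  \<open>(Im z - exp s) (exp (2 d) - 1) = 0\<close>.\<close>

lemma eq_imag_exp_if_cosh_hdist:
  assumes z: "z \<in> UHP" and d: "d > 0"
    and h1: "cosh (hdist \<i> z) = cosh s"
    and h2: "cosh (hdist z (\<i> * of_real (exp d))) = cosh (d - s)"
  shows "z = \<i> * of_real (exp s)"
proof -
  define x where "x = Re z"
  define y where "y = Im z"
  define E where "E = exp d"
  define a where "a = exp s"
  have y: "y > 0" using z by (simp add: mem_UHP_iff y_def)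
  have E: "E > 1" using d by (simp add: E_def)
  have a: "a > 0" by (simp add: a_def)
  have iU: "\<i> \<in> UHP" by (simp add: mem_UHP_iff)
  have eU: "\<i> * of_real (exp d) \<in> UHP" by (rule imag_exp_in_UHP)
  have norm_i: "(cmod (\<i> - z))^2 = x^2 + (y - 1)^2"
    by (simp add: cmod_power2 x_def y_def power2_commute)
  have norm_iE: "(cmod (z - \<i> * of_real E))^2 = x^2 + (y - E)^2"
    by (simp add: cmod_power2 x_def y_def)
  have cosh_i: "1 + (x^2 + (y - 1)^2) / (2 * y) = (a + inverse a) / 2"
    using h1 unfolding cosh_hdist[OF iU z] norm_i by (simp add: y_def a_def cosh_real_exp)
  have cosh_iE: "1 + (x^2 + (y - E)^2) / (2 * y * E) = (E * inverse a + a * inverse E) / 2"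
    using h2 unfolding cosh_hdist[OF z eU] norm_iE[unfolded E_def]
    by (simp add: y_def a_def E_def cosh_real_exp exp_diff field_simps)
  have sphere_i: "x^2 + y^2 + 1 = y * (a + inverse a)"
    using cosh_i y a by (simp add: field_simps power2_eq_square)
  have "(2 * E) * (x^2 + y^2 + E^2) = (2 * E) * (y * (E^2 * inverse a + a))"
    using cosh_iE y E a by (simp add: field_simps power2_eq_square)
  hence sphere_iE: "x^2 + y^2 + E^2 = y * (E^2 * inverse a + a)"
    using E by simp
  have ia: "a * inverse a = 1" using a by simp
  have "(y - a) * (E^2 - 1) = 0"
    using sphere_i sphere_iE ia by algebra
  moreover have "E^2 - 1 > 0" using E one_less_power[OF E, of 2] by simp
  ultimately have ya: "y = a" by simp
  have "x^2 = 0" using sphere_i ya a by (simp add: field_simps power2_eq_square)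
  hence "x = 0" by simp
  thus ?thesis using ya by (simp add: complex_eq_iff x_def y_def a_def)
qed

text \<open>The maps \<open>z \<mapsto> (c z + s\<^sub>0) / (c - s\<^sub>0 z)\<close> fix \<open>\<i>\<close>; sending \<open>x + \<i> y\<close> to \<open>\<i> E\<close> is a pair
  of linear equations in \<open>(c, s\<^sub>0)\<close> which, by the hypothesis, has the nonzero solution
  \<open>(y E - 1, x)\<close>, or \<open>(0, 1)\<close> if that one vanishes.\<close>

lemma rotation_to_imag_axis:
  assumes y: "y > 0" and key: "E * (x^2 + y^2 + 1) = y * (E^2 + 1)"
  obtains c s0 where "c^2 + s0^2 > 0" "real_moebius c s0 (-s0) c \<i> = \<i>"
    "real_moebius c s0 (-s0) c (Complex x y) = \<i> * of_real E"
proof -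
  have maps: "real_moebius c s0 (-s0) c (Complex x y) = \<i> * of_real E"
    if "c * x + s0 * (1 - E * y) = 0" "c * (y - E) + E * s0 * x = 0" "c^2 + s0^2 > 0" for c s0
  proof -
    have "c * c - s0 * (-s0) = c^2 + s0^2" by (simp add: power2_eq_square)
    hence "c * c - s0 * (-s0) \<noteq> 0" using that(3) by linarith
    hence "of_real (-s0) * Complex x y + of_real c \<noteq> 0"
      using real_moebius_denom_nonzero[of "Complex x y" c c s0 "-s0"] y by simp
    moreover have "of_real c * Complex x y + of_real s0
        = \<i> * of_real E * (of_real (-s0) * Complex x y + of_real c)"
      using that(1,2) by (simp add: complex_eq_iff algebra_simps)
    ultimately show ?thesis unfolding moebius_def by (simp add: divide_eq_eq)
  qed
  have fixes_i: "real_moebius c s0 (-s0) c \<i> = \<i>" if "c^2 + s0^2 > 0" for c s0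
  proof -
    have "of_real (-s0) * \<i> + of_real c \<noteq> 0" using that by (auto simp: complex_eq_iff)
    moreover have "of_real c * \<i> + of_real s0 = \<i> * (of_real (-s0) * \<i> + of_real c)"
      by (simp add: algebra_simps)
    ultimately show ?thesis unfolding moebius_def by (simp add: divide_eq_eq)
  qed
  show ?thesis
  proof (cases "y * E - 1 = 0 \<and> x = 0")
    case True
    thus ?thesis using that[of 0 1] maps[of 0 1] fixes_i[of 0 1] by (simp add: algebra_simps)
  next
    case False
    have "(y * E - 1)^2 + x^2 > 0" using False by (auto simp: add_pos_nonneg add_nonneg_pos)
    moreover have "(y * E - 1) * (y - E) + E * x * x = 0" using key by algebra
    ultimately show ?thesis
      using that[of "y * E - 1" x] maps[of "y * E - 1" x] fixes_i[of "y * E - 1" x]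
      by (simp add: algebra_simps)
  qed
qed

lemma real_moebius_normalize_pair:
  assumes P: "P \<in> UHP" and Q: "Q \<in> UHP"
  shows "\<exists>p q s t. p * t - q * s > 0 \<and> real_moebius p q s t P = \<i> \<and>
           real_moebius p q s t Q = \<i> * of_real (exp (hdist P Q))"
proof -
  define a b where "a = Re P" and "b = Im P"
  let ?T = "real_moebius 1 (-a) 0 b"
  have b: "b > 0" using P by (simp add: mem_UHP_iff b_def)
  have detT: "1 * b - (-a) * 0 > 0" and detT': "1 * b - (-a) * 0 \<noteq> 0" using b by simp_all
  have TP: "?T P = \<i>" using b unfolding moebius_def by (simp add: complex_eq_iff a_def b_def)
  define x y where "x = Re (?T Q)" and "y = Im (?T Q)"
  have y: "y > 0" using real_moebius_in_UHP[OF Q detT] by (simp add: y_def mem_UHP_iff)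
  have TQ: "?T Q = Complex x y" by (simp add: x_def y_def)
  define E where "E = exp (hdist P Q)"
  have "cosh (hdist \<i> (Complex x y)) = (E + inverse E) / 2"
    using hdist_real_moebius[OF P Q detT] TP TQ by (simp add: E_def cosh_real_exp)
  moreover have "(cmod (\<i> - Complex x y))^2 = x^2 + (y - 1)^2" by (simp add: cmod_power2 power2_commute)
  ultimately have "1 + (x^2 + (y - 1)^2) / (2 * y) = (E + inverse E) / 2"
    using cosh_hdist[of \<i> "Complex x y"] y by (simp add: mem_UHP_iff)
  hence key: "E * (x^2 + y^2 + 1) = y * (E^2 + 1)"
    using y by (simp add: E_def field_simps power2_eq_square)
  obtain c s0 where cs: "c^2 + s0^2 > 0" and RI: "real_moebius c s0 (-s0) c \<i> = \<i>"
    and RQ: "real_moebius c s0 (-s0) c (Complex x y) = \<i> * of_real E"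
    using rotation_to_imag_axis[OF y key] .
  let ?N = "real_moebius (c * 1 + s0 * 0) (c * (-a) + s0 * b) (-s0 * 1 + c * 0) (-s0 * (-a) + c * b)"
  have N: "?N z = real_moebius c s0 (-s0) c (?T z)" if "Im z > 0" for z
    using real_moebius_compose[OF that detT', of c s0 "-s0" c] by simp
  have "(c * 1 + s0 * 0) * (-s0 * (-a) + c * b) - (c * (-a) + s0 * b) * (-s0 * 1 + c * 0)
      = b * (c^2 + s0^2)"
    by (simp add: algebra_simps power2_eq_square)
  moreover have "Im P > 0" "Im Q > 0" using P Q by (simp_all add: mem_UHP_iff)
  ultimately show ?thesis using N TP TQ RI RQ b cs
    by (intro exI[of _ "c * 1 + s0 * 0"] exI[of _ "c * (-a) + s0 * b"] exI[of _ "-s0 * 1 + c * 0"]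
      exI[of _ "-s0 * (-a) + c * b"]) (simp add: E_def)
qed

lemma geodesic_line_in_UHP: "geodesic_line \<gamma> \<Longrightarrow> \<gamma> t \<in> UHP"
  unfolding geodesic_line_def by auto

lemma geodesic_line_hdist: "geodesic_line \<gamma> \<Longrightarrow> hdist (\<gamma> s) (\<gamma> t) = \<bar>s - t\<bar>"
  unfolding geodesic_line_def by auto

lemma geodesic_line_moebius_image:
  assumes g: "geodesic_line \<gamma>" and det: "p * t - q * s > 0"
    and m0: "real_moebius p q s t (\<gamma> t0) = \<i>" and m1: "real_moebius p q s t (\<gamma> (t0 + 1)) = \<i> * of_real (exp 1)"
  shows "real_moebius p q s t (\<gamma> u) = \<i> * of_real (exp (u - t0))"
proof -
  let ?M = "real_moebius p q s t"
  have U: "\<And>v. \<gamma> v \<in> UHP" using geodesic_line_in_UHP[OF g] .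
  have "hdist \<i> (?M (\<gamma> u)) = \<bar>t0 - u\<bar>"
    using hdist_real_moebius[OF U U det, of t0 u] m0 geodesic_line_hdist[OF g] by simp
  hence h1: "cosh (hdist \<i> (?M (\<gamma> u))) = cosh (u - t0)"
    by (metis abs_minus_commute cosh_real_abs)
  have "hdist (?M (\<gamma> u)) (\<i> * of_real (exp 1)) = \<bar>u - (t0 + 1)\<bar>"
    using hdist_real_moebius[OF U U det, of u "t0 + 1"] m1 geodesic_line_hdist[OF g] by simp
  hence h2: "cosh (hdist (?M (\<gamma> u)) (\<i> * of_real (exp 1))) = cosh (1 - (u - t0))"
    by (metis abs_minus_commute cosh_real_abs diff_diff_eq)
  show ?thesis
    by (rule eq_imag_exp_if_cosh_hdist[OF real_moebius_in_UHP[OF U det] _ h1 h2]) simp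
qed

section \<open>Geodesic segments and perpendiculars\<close>

lemma hsegment_commute: "hsegment x y = hsegment y x"
  unfolding hsegment_def by (auto simp: hdist_commute)

lemma hdist_mem_hsegment:
  assumes "x \<in> UHP" "y \<in> UHP" "z \<in> hsegment x y"
  shows "hdist x z \<in> {0..hdist x y}"
  using assms hdist_nonneg[of x z] hdist_nonneg[of z y] by (auto simp: hsegment_def)

lemma real_moebius_hsegment:
  assumes det: "p * t - q * s > 0" and x: "x \<in> UHP" and y: "y \<in> UHP" and z: "z \<in> hsegment x y"
  shows "real_moebius p q s t z \<in> hsegment (real_moebius p q s t x) (real_moebius p q s t y)"
proof -
  have zU: "z \<in> UHP" and e: "hdist x z + hdist z y = hdist x y" using z by (auto simp: hsegment_def)
  show ?thesis unfolding hsegment_def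
    using real_moebius_in_UHP[OF zU det] e hdist_real_moebius[OF x zU det]
      hdist_real_moebius[OF zU y det] hdist_real_moebius[OF x y det] by simp
qed

lemma real_moebius_hsegment_imag_axis:
  assumes X: "X \<in> UHP" and Y: "Y \<in> UHP" and det: "p * t - q * s > 0"
    and NX: "real_moebius p q s t X = \<i>"
    and NY: "real_moebius p q s t Y = \<i> * of_real (exp (hdist X Y))"
    and d: "hdist X Y > 0" and z: "z \<in> hsegment X Y"
  shows "real_moebius p q s t z = \<i> * of_real (exp (hdist X z))"
proof -
  have zU: "z \<in> UHP" and zs: "hdist X z + hdist z Y = hdist X Y" using z by (auto simp: hsegment_def)
  have h1: "cosh (hdist \<i> (real_moebius p q s t z)) = cosh (hdist X z)"
    using hdist_real_moebius[OF X zU det] NX by simp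
  have "hdist z Y = hdist X Y - hdist X z" using zs by simp
  hence h2: "cosh (hdist (real_moebius p q s t z) (\<i> * of_real (exp (hdist X Y))))
      = cosh (hdist X Y - hdist X z)"
    using hdist_real_moebius[OF zU Y det] NY by simp
  show ?thesis by (rule eq_imag_exp_if_cosh_hdist[OF real_moebius_in_UHP[OF zU det] d h1 h2])
qed

lemma hdist_imag:
  assumes w: "w \<in> UHP" and Y: "Y > 0"
  shows "hdist w (\<i> * of_real Y) = arcosh (((cmod w)^2 + Y^2) / (2 * Im w * Y))"
proof -
  have y: "Im w > 0" using w by (simp add: mem_UHP_iff)
  have "(cmod (w - \<i> * of_real Y))^2 = (Re w)^2 + (Im w - Y)^2" by (simp add: cmod_power2)
  moreover have "(cmod w)^2 = (Re w)^2 + (Im w)^2" by (simp add: cmod_power2)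
  ultimately have "1 + (cmod (w - \<i> * of_real Y))^2 / (2 * Im w * Im (\<i> * of_real Y))
      = ((cmod w)^2 + Y^2) / (2 * Im w * Y)"
    using y Y by (simp add: field_simps power2_eq_square)
  thus ?thesis unfolding hdist_def by simp
qed

lemma arcosh_real_mono: "1 \<le> x \<Longrightarrow> x \<le> y \<Longrightarrow> arcosh x \<le> arcosh (y::real)"
  using arcosh_less_iff_real[of y x] by linarith

lemma arcosh_real_eq_iff:
  assumes "x \<ge> 1" "r > 0"
  shows "arcosh x = r \<longleftrightarrow> x = cosh (r::real)"
  using assms cosh_arcosh_real arcosh_cosh_real by auto

lemma Inf_hdist_imag_axis:
  assumes w: "w \<in> UHP"
  shows "Inf (range (\<lambda>u. hdist w (\<i> * of_real (exp (u - t0))))) = arcosh (cmod w / Im w)"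
proof (rule cInf_eq_minimum)
  have y: "Im w > 0" using w by (simp add: mem_UHP_iff)
  have rho: "cmod w > 0" using y by (auto simp: mem_UHP_iff)
  have "exp (ln (cmod w) + t0 - t0) = cmod w" using rho by simp
  hence "hdist w (\<i> * of_real (exp (ln (cmod w) + t0 - t0))) = arcosh (((cmod w)^2 + (cmod w)^2) / (2 * Im w * cmod w))"
    using hdist_imag[OF w rho] by simp
  also have "\<dots> = arcosh (cmod w / Im w)"
    using rho y by (simp add: field_simps power2_eq_square)
  finally have at_modulus: "hdist w (\<i> * of_real (exp (ln (cmod w) + t0 - t0))) = arcosh (cmod w / Im w)" .
  show "arcosh (cmod w / Im w) \<in> range (\<lambda>u. hdist w (\<i> * of_real (exp (u - t0))))"
    by (rule image_eqI[where x="ln (cmod w) + t0"]) (use at_modulus in simp_all)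
next
  fix z assume "z \<in> range (\<lambda>u. hdist w (\<i> * of_real (exp (u - t0))))"
  then obtain u where z: "z = hdist w (\<i> * of_real (exp (u - t0)))" by auto
  define Y where "Y = exp (u - t0)"
  have Y: "Y > 0" by (simp add: Y_def)
  have y: "Im w > 0" using w by (simp add: mem_UHP_iff)
  have rho: "cmod w \<ge> Im w" by (simp add: abs_Im_le_cmod abs_le_D1)
  have ge1: "1 \<le> cmod w / Im w" using y rho by simp
  have "0 \<le> (cmod w - Y)^2" by simp
  hence "2 * cmod w * Y \<le> (cmod w)^2 + Y^2" by (simp add: power2_eq_square algebra_simps)
  hence "cmod w / Im w \<le> ((cmod w)^2 + Y^2) / (2 * Im w * Y)"
    using y Y by (simp add: field_simps)
  hence "arcosh (cmod w / Im w) \<le> arcosh (((cmod w)^2 + Y^2) / (2 * Im w * Y))"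
    by (rule arcosh_real_mono[OF ge1])
  thus "arcosh (cmod w / Im w) \<le> z" using hdist_imag[OF w Y] unfolding z Y_def by simp
qed

lemma imag_exp_has_vector_derivative:
  "((\<lambda>x. \<i> * of_real (exp (x - c))) has_vector_derivative \<i> * of_real (exp (y - c))) (at y within S)"
proof -
  have "((\<lambda>x. of_real (exp (x - c))) has_vector_derivative (of_real (exp (y - c) * 1) :: complex))
      (at y within S)"
    by (intro has_vector_derivative_of_real) (auto intro!: derivative_eq_intros)
  thus ?thesis using has_vector_derivative_mult_right by fastforce
qed

lemma real_moebius_imag_axis_tangent:
  assumes det: "p * t - q * s > 0" and d: "d > 0"
    and du: "((\<lambda>x. real_moebius p q s t (\<i> * of_real (exp x))) has_vector_derivative u)
      (at 0 within {0..d})"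
    and horizontal: "Im u = 0"
  shows "t^2 = s^2"
proof -
  define D where "D = p * t - q * s"
  define w where "w = of_real s * \<i> + of_real t"
  have D: "D > 0" using det D_def by simp
  have wnz: "w \<noteq> 0" unfolding w_def using real_moebius_denom_nonzero[of \<i> p t q s] det by simp
  have "(real_moebius p q s t has_field_derivative of_real D / w^2) (at \<i>)"
    using real_moebius_has_field_derivative[of \<i> p t q s] det unfolding D_def w_def by simp
  hence "((real_moebius p q s t \<circ> (\<lambda>x. \<i> * of_real (exp (x - 0)))) has_vector_derivative
      \<i> * of_real (exp (0 - 0)) * (of_real D / w^2)) (at 0 within {0..d})"
    by (intro field_vector_diff_chain_within imag_exp_has_vector_derivative)
      (simp add: has_field_derivative_at_within)
  hence "((\<lambda>x. real_moebius p q s t (\<i> * of_real (exp x))) has_vector_derivative \<i> * (of_real D / w^2))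
      (at 0 within {0..d})"
    by (simp add: o_def)
  hence u: "u = \<i> * (of_real D / w^2)"
    using vector_derivative_unique_within_closed_interval[of 0 d 0, OF d] du d by auto
  have "Im u = Re (of_real D * (1 / w^2))" unfolding u Im_i_times by simp
  also have "\<dots> = D * Re (1 / w^2)" by (simp add: Re_divide)
  also have "Re (1 / w^2) = Re (w^2) / (cmod (w^2))^2" by (simp add: Re_divide cmod_power2)
  also have "Re (w^2) = t^2 - s^2" by (simp add: w_def power2_eq_square)
  finally have "D * ((t^2 - s^2) / (cmod (w^2))^2) = 0" using horizontal by simp
  thus ?thesis using D wnz by simp
qed

lemma norm_real_moebius_imag_axis:
  assumes det: "p * t - q * s \<noteq> 0" and ts: "t^2 = s^2"
    and Mi: "real_moebius p q s t \<i> = \<i> * of_real \<beta>" and \<beta>: "\<beta> \<ge> 0" and y: "y > 0"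
  shows "cmod (real_moebius p q s t (\<i> * of_real y)) = \<beta>"
proof -
  define num where "num = of_real p * (\<i> * of_real y) + of_real q"
  define den where "den = of_real s * (\<i> * of_real y) + of_real t"
  have nz_i: "of_real s * \<i> + of_real t \<noteq> 0" using real_moebius_denom_nonzero[of \<i> p t q s] det by simp
  have den: "den \<noteq> 0" using real_moebius_denom_nonzero[of "\<i> * of_real y" p t q s] det y
    unfolding den_def by simp
  have "of_real p * \<i> + of_real q = \<i> * of_real \<beta> * (of_real s * \<i> + of_real t)"
    using Mi nz_i unfolding moebius_def by (simp add: divide_eq_eq)
  hence pq: "p = \<beta> * t" "q = - (\<beta> * s)"
    by (simp_all add: complex_eq_iff algebra_simps)
  have "(cmod num)^2 = \<beta>^2 * (t^2 * y^2 + s^2)"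
    unfolding num_def pq cmod_power2 by (simp add: power2_eq_square algebra_simps)
  also have "\<dots> = \<beta>^2 * (cmod den)^2"
    unfolding den_def cmod_power2 using ts by (simp add: power2_eq_square algebra_simps)
  finally have "cmod num = \<beta> * cmod den"
    using \<beta> by (metis norm_ge_zero power2_eq_imp_eq power_mult_distrib zero_le_mult_iff)
  thus ?thesis using den unfolding moebius_def num_def den_def by (simp add: norm_divide)
qed

lemma real_moebius_preserves_orthogonality:
  assumes z: "Im z > 0" and det: "p * t - q * s \<noteq> 0"
    and f: "(f has_vector_derivative u) (at x within S)" "f x = z"
    and g: "(g has_vector_derivative v) (at y within T)" "g y = z"
    and orth: "Re (u * cnj v) = 0"
  obtains u' v' where "((real_moebius p q s t \<circ> f) has_vector_derivative u') (at x within S)"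
    "((real_moebius p q s t \<circ> g) has_vector_derivative v') (at y within T)"
    "Re (u' * cnj v') = 0"
proof -
  define D where "D = of_real (p * t - q * s) / (of_real s * z + of_real t)^2"
  have dM: "(real_moebius p q s t has_field_derivative D) (at z)"
    unfolding D_def by (rule real_moebius_has_field_derivative[OF z det])
  have "((real_moebius p q s t \<circ> f) has_vector_derivative u * D) (at x within S)"
    using field_vector_diff_chain_within[OF f(1), of _ D] dM f(2) by (simp add: has_field_derivative_at_within)
  moreover have "((real_moebius p q s t \<circ> g) has_vector_derivative v * D) (at y within T)"
    using field_vector_diff_chain_within[OF g(1), of _ D] dM g(2) by (simp add: has_field_derivative_at_within)
  moreover have "u * D * cnj (v * D) = u * cnj v * (D * cnj D)" by (simp add: algebra_simps)
  hence "Re (u * D * cnj (v * D)) = Re (u * cnj v * of_real ((cmod D)^2))"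
    unfolding complex_norm_square by (simp only:)
  hence "Re (u * D * cnj (v * D)) = 0" using orth by simp
  ultimately show ?thesis using that by blast
qed

text \<open>A geodesic segment leaving the imaginary axis horizontally at \<open>\<i> \<beta>\<close> stays on the
  circle \<open>|z| = \<beta>\<close>: the isometry straightening the segment has an inverse that maps the imaginary
  axis onto that circle.\<close>

lemma perp_segment_imag_axis_norm:
  fixes \<beta> d :: real and \<sigma> :: "real \<Rightarrow> complex"
  assumes \<beta>: "\<beta> > 0" and A: "A \<in> UHP" and d: "d = hdist (\<i> * of_real \<beta>) A" "d > 0"
    and sU: "\<sigma> ` {0..d} \<subseteq> UHP"
    and iso: "\<forall>s\<in>{0..d}. \<forall>t\<in>{0..d}. hdist (\<sigma> s) (\<sigma> t) = \<bar>s - t\<bar>"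
    and s0: "\<sigma> 0 = \<i> * of_real \<beta>" and sd: "\<sigma> d = A"
    and du: "(\<sigma> has_vector_derivative u) (at 0 within {0..d})"
    and perp: "Re (u * cnj (\<i> * of_real \<beta>)) = 0"
  shows "cmod A = \<beta>"
proof -
  define B where "B = \<i> * of_real \<beta>"
  have BU: "B \<in> UHP" using \<beta> by (simp add: B_def mem_UHP_iff)
  obtain p q s t where det: "p * t - q * s > 0" and NB: "real_moebius p q s t B = \<i>"
    and NA: "real_moebius p q s t A = \<i> * of_real (exp d)"
    using real_moebius_normalize_pair[OF BU A] d(1) unfolding B_def by blast
  have detinv: "t * p - (-q) * (-s) > 0" using det by (simp add: mult.commute)
  let ?Ni = "real_moebius t (-q) (-s) p"
  have sx: "\<sigma> x = ?Ni (\<i> * of_real (exp x))" if x: "x \<in> {0..d}" for x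
  proof -
    have "hdist B (\<sigma> x) = x" "hdist (\<sigma> x) A = d - x"
      using iso x d(2) s0 sd unfolding B_def by force+
    moreover have "\<sigma> x \<in> UHP" using sU x by auto
    ultimately have seg: "\<sigma> x \<in> hsegment B A" using d(1) unfolding hsegment_def B_def by simp
    have "real_moebius p q s t (\<sigma> x) = \<i> * of_real (exp x)"
      using real_moebius_hsegment_imag_axis[OF BU A det NB _ _ seg] NA d \<open>hdist B (\<sigma> x) = x\<close>
      unfolding B_def by simp
    thus ?thesis using real_moebius_left_inverse[of "\<sigma> x" p t q s] \<open>\<sigma> x \<in> UHP\<close> det
      by (simp add: mem_UHP_iff)
  qed
  have "((\<lambda>x. ?Ni (\<i> * of_real (exp x))) has_vector_derivative u) (at 0 within {0..d})"
    by (rule has_vector_derivative_transform_within[OF du zero_less_one]) (use d(2) sx in auto)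
  moreover have "Im u = 0" using perp \<beta> by simp
  ultimately have ps: "p^2 = s^2"
    using real_moebius_imag_axis_tangent[OF detinv d(2)] by simp
  have "?Ni \<i> = \<i> * of_real \<beta>" "?Ni (\<i> * of_real (exp d)) = A"
    using real_moebius_left_inverse[of B p t q s] real_moebius_left_inverse[of A p t q s]
      BU A det NB NA unfolding B_def by (simp_all add: mem_UHP_iff)
  thus ?thesis
    using norm_real_moebius_imag_axis[of t p "-q" "-s" \<beta> "exp d"] detinv ps \<beta> by simp
qed

lemma hsegment_imag_axis:
  assumes ab: "a < b" and z: "z \<in> hsegment (\<i> * of_real (exp a)) (\<i> * of_real (exp b))"
  obtains u where "u \<in> {a..b}" "z = \<i> * of_real (exp u)"
proof -
  let ?N = "real_moebius 1 0 0 (exp a)"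
  have det: "1 * exp a - 0 * 0 > (0::real)" by simp
  have d: "hdist (\<i> * of_real (exp a)) (\<i> * of_real (exp b)) = b - a"
    using hdist_imag_exp[of a b] ab by simp
  have "?N z = \<i> * of_real (exp (hdist (\<i> * of_real (exp a)) z))"
    by (rule real_moebius_hsegment_imag_axis[OF imag_exp_in_UHP imag_exp_in_UHP det _ _ _ z])
      (use ab d in \<open>simp_all add: moebius_def exp_diff\<close>)
  hence "z = \<i> * of_real (exp (a + hdist (\<i> * of_real (exp a)) z))"
    by (simp add: moebius_def exp_add field_simps)
  moreover have "hdist (\<i> * of_real (exp a)) z \<in> {0..b - a}"
    using hdist_mem_hsegment[OF imag_exp_in_UHP imag_exp_in_UHP z] d by simp
  ultimately show ?thesis using that[of "a + hdist (\<i> * of_real (exp a)) z"] by simp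
qed

section \<open>The box in normalized coordinates\<close>

text \<open>In normalized coordinates the axis is the positive imaginary axis, the hypercycle lies on
  the ray \<open>Re w = \<sigma> sinh r Im w\<close> and the feet of the perpendiculars are \<open>\<i>\<close> and \<open>\<i> exp \<tau>\<close>.\<close>

definition model_box :: "real \<Rightarrow> real \<Rightarrow> real \<Rightarrow> complex set" where
  "model_box r \<sigma> \<tau> = {w. Im w > 0 \<and> 0 \<le> \<sigma> * Re w \<and> \<sigma> * Re w \<le> sinh r * Im w \<and>
      min 1 (exp \<tau>) \<le> cmod w \<and> cmod w \<le> max 1 (exp \<tau>)}"

lemma hsegment_axis_subset_model_box:
  assumes r: "r > 0" and tau: "\<bar>\<tau>\<bar> = tanh r"
  shows "hsegment \<i> (\<i> * of_real (exp \<tau>)) \<subseteq> model_box r \<sigma> \<tau>"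
proof
  fix z assume z: "z \<in> hsegment \<i> (\<i> * of_real (exp \<tau>))"
  obtain u where u: "u \<in> {min 0 \<tau>..max 0 \<tau>}" "z = \<i> * of_real (exp u)"
  proof (cases "\<tau> > 0")
    case True
    thus ?thesis using hsegment_imag_axis[of 0 \<tau> z] z that by auto
  next
    case False
    hence "\<tau> < 0" using tau r by (cases "\<tau> = 0") auto
    moreover have "z \<in> hsegment (\<i> * of_real (exp \<tau>)) (\<i> * of_real (exp 0))"
      using z hsegment_commute[of \<i>] by simp
    ultimately show ?thesis using hsegment_imag_axis[of \<tau> 0 z] that by auto
  qed
  moreover have "min 1 (exp \<tau>) \<le> exp u" "exp u \<le> max 1 (exp \<tau>)"
    using u(1) by (auto simp: min_def max_def split: if_splits)
  ultimately show "z \<in> model_box r \<sigma> \<tau>" using r unfolding model_box_def by (simp add: norm_mult)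
qed

text \<open>This map is an isometry taking the imaginary axis onto the circle \<open>|w| = \<kappa>\<close> and \<open>\<i>\<close> to
  \<open>\<i> \<kappa>\<close>, so the right-hand side is the arc-length parametrization of the geodesic that leaves
  the imaginary axis perpendicularly at \<open>\<i> \<kappa>\<close>.\<close>

lemma real_moebius_imag_exp_ray:
  assumes sig: "\<sigma> = 1 \<or> \<sigma> = -1"
  shows "real_moebius \<kappa> (-\<sigma> * \<kappa>) \<sigma> 1 (\<i> * of_real (exp s))
    = Complex (\<kappa> * \<sigma> * tanh s) (\<kappa> / cosh s)"
proof -
  define E where "E = exp s"
  define N where "N = E^2 + 1"
  have E: "E > 0" by (simp add: E_def)
  have N: "N > 0" unfolding N_def by (simp add: add_nonneg_pos)
  have ss: "\<sigma> * \<sigma> = 1" using sig by auto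
  have sh: "sinh s = (N - 2) / (2 * E)"
    unfolding sinh_real_exp E_def[symmetric] N_def using E by (simp add: field_simps power2_eq_square)
  have ch: "cosh s = N / (2 * E)"
    unfolding cosh_real_exp E_def[symmetric] N_def using E by (simp add: field_simps power2_eq_square)
  have th: "tanh s = (N - 2) / N"
    unfolding tanh_def sh ch using E N by simp
  have k: "\<kappa> / cosh s = \<kappa> * (2 * E / N)" unfolding ch using E by simp
  have tanh_re: "tanh s - E * (2 * E / N) = -1" and tanh_im: "E * tanh s + 2 * E / N = E"
    unfolding th using N by (simp_all add: field_simps; simp add: N_def power2_eq_square)+
  have "\<kappa> * \<sigma> * tanh s - \<kappa> / cosh s * (\<sigma> * E) = \<kappa> * \<sigma> * (tanh s - E * (2 * E / N))"
    unfolding k by (simp add: algebra_simps)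
  hence re: "\<kappa> * \<sigma> * tanh s - \<kappa> / cosh s * (\<sigma> * E) = - \<sigma> * \<kappa>"
    unfolding tanh_re by simp
  have "\<kappa> * \<sigma> * tanh s * (\<sigma> * E) + \<kappa> / cosh s = \<kappa> * ((\<sigma> * \<sigma>) * (E * tanh s) + 2 * E / N)"
    unfolding k by (simp add: algebra_simps)
  hence im: "\<kappa> * \<sigma> * tanh s * (\<sigma> * E) + \<kappa> / cosh s = \<kappa> * E"
    unfolding ss using tanh_im by simp
  have "of_real \<sigma> * (\<i> * of_real E) + 1 \<noteq> (0::complex)"
    using sig by (auto simp: complex_eq_iff)
  moreover have "Complex (\<kappa> * \<sigma> * tanh s) (\<kappa> / cosh s) * (of_real \<sigma> * (\<i> * of_real E) + 1)
      = of_real \<kappa> * (\<i> * of_real E) + of_real (-\<sigma> * \<kappa>)"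
    using re im by (simp add: complex_eq_iff algebra_simps)
  ultimately show ?thesis unfolding moebius_def E_def[symmetric] by (simp add: divide_eq_eq)
qed

lemma norm_ray_circle_point:
  assumes sig: "\<sigma> = 1 \<or> \<sigma> = -1" and k: "\<kappa> \<ge> 0"
  shows "cmod (Complex (\<kappa> * \<sigma> * tanh u) (\<kappa> / cosh u)) = \<kappa>"
proof -
  have "\<sigma> * \<sigma> = 1" using sig by auto
  hence "(cmod (Complex (\<kappa> * \<sigma> * tanh u) (\<kappa> / cosh u)))^2 = \<kappa>^2 * ((sinh u)^2 + 1) / (cosh u)^2"
    unfolding cmod_power2 by (simp add: tanh_def power_divide field_simps power2_eq_square)
  thus ?thesis using k by (simp add: cosh_square_eq[symmetric] power2_eq_imp_eq)
qed

lemma ray_circle_point_in_model_box: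
  assumes sig: "\<sigma> = 1 \<or> \<sigma> = -1" and k: "\<kappa> > 0"
    and "min 1 (exp \<tau>) \<le> \<kappa>" "\<kappa> \<le> max 1 (exp \<tau>)" and u: "u \<in> {0..r}"
  shows "Complex (\<kappa> * \<sigma> * tanh u) (\<kappa> / cosh u) \<in> model_box r \<sigma> \<tau>"
proof -
  have "\<sigma> * (\<kappa> * \<sigma> * tanh u) = \<kappa> * sinh u / cosh u" using sig by (auto simp: tanh_def)
  moreover have "0 \<le> \<kappa> * sinh u / cosh u" using u k by simp
  moreover have "\<kappa> * sinh u / cosh u \<le> sinh r * (\<kappa> / cosh u)"
    using u k by (simp add: divide_right_mono mult.commute)
  ultimately show ?thesis
    using assms norm_ray_circle_point[OF sig, of \<kappa> u] unfolding model_box_def by simp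
qed

lemma hsegment_perp_subset_model_box:
  assumes r: "r > 0" and sig: "\<sigma> = 1 \<or> \<sigma> = -1" and k: "\<kappa> > 0"
    and klo: "min 1 (exp \<tau>) \<le> \<kappa>" and khi: "\<kappa> \<le> max 1 (exp \<tau>)"
  shows "hsegment (\<i> * of_real \<kappa>) (Complex (\<kappa> * \<sigma> * tanh r) (\<kappa> / cosh r)) \<subseteq> model_box r \<sigma> \<tau>"
proof
  define A where "A = Complex (\<kappa> * \<sigma> * tanh r) (\<kappa> / cosh r)"
  define X where "X = \<i> * of_real \<kappa>"
  fix z assume z: "z \<in> hsegment X A"
  let ?Q = "real_moebius \<kappa> (-\<sigma> * \<kappa>) \<sigma> 1"
  let ?N = "real_moebius 1 (- (-\<sigma> * \<kappa>)) (-\<sigma>) \<kappa>"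
  have det: "\<kappa> * 1 - (-\<sigma> * \<kappa>) * \<sigma> > 0" using k sig by auto
  have detN: "1 * \<kappa> - (- (-\<sigma> * \<kappa>)) * (-\<sigma>) > 0" using det by (simp add: algebra_simps)
  have Qi: "?Q \<i> = X" and Qr: "?Q (\<i> * of_real (exp r)) = A"
    using real_moebius_imag_exp_ray[OF sig, of \<kappa> 0] real_moebius_imag_exp_ray[OF sig, of \<kappa> r]
    by (simp_all add: complex_eq_iff X_def A_def)
  have XU: "X \<in> UHP" and AU: "A \<in> UHP" using k by (simp_all add: mem_UHP_iff X_def A_def)
  have dr: "hdist X A = r"
    using hdist_real_moebius[OF _ imag_exp_in_UHP det, of \<i> r] Qi Qr hdist_imag_exp[of 0 r] r
    by (simp add: mem_UHP_iff)
  have NX: "?N X = \<i>" and NA: "?N A = \<i> * of_real (exp (hdist X A))"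
    using real_moebius_left_inverse[of \<i> \<kappa> 1 "-\<sigma> * \<kappa>" \<sigma>]
      real_moebius_left_inverse[of "\<i> * of_real (exp r)" \<kappa> 1 "-\<sigma> * \<kappa>" \<sigma>] det Qi Qr dr by simp_all
  have zU: "z \<in> UHP" using z by (simp add: hsegment_def)
  have "z = ?Q (?N z)"
    using real_moebius_right_inverse[of z \<kappa> 1 "-\<sigma> * \<kappa>" \<sigma>] zU det by (simp add: mem_UHP_iff)
  also have "?N z = \<i> * of_real (exp (hdist X z))"
    using real_moebius_hsegment_imag_axis[OF XU AU detN NX NA _ z] dr r by simp
  also have "?Q \<dots> = Complex (\<kappa> * \<sigma> * tanh (hdist X z)) (\<kappa> / cosh (hdist X z))"
    by (rule real_moebius_imag_exp_ray[OF sig])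
  finally have "z = Complex (\<kappa> * \<sigma> * tanh (hdist X z)) (\<kappa> / cosh (hdist X z))" .
  moreover have "hdist X z \<in> {0..r}" using hdist_mem_hsegment[OF XU AU z] dr by simp
  ultimately show "z \<in> model_box r \<sigma> \<tau>"
    using ray_circle_point_in_model_box[OF sig k klo khi] by metis
qed

lemma eq_ray_point:
  assumes sig: "\<sigma> = 1 \<or> \<sigma> = -1" and w: "Im w > 0" and re: "Re w = \<sigma> * sinh r * Im w" and c: "cmod w = \<kappa>"
  shows "w = Complex (\<kappa> * \<sigma> * tanh r) (\<kappa> / cosh r)"
proof -
  have ss: "\<sigma> * \<sigma> = 1" using sig by auto
  have "\<kappa>^2 = (Im w)^2 * ((sinh r)^2 + 1)"
    unfolding c[symmetric] cmod_power2 re using ss by (simp add: power2_eq_square algebra_simps)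
  also have "(sinh r)^2 + 1 = (cosh r)^2" by (simp add: cosh_square_eq)
  finally have "\<kappa>^2 = (Im w * cosh r)^2" by (simp add: power_mult_distrib)
  moreover have "\<kappa> \<ge> 0" using c by auto
  moreover have "Im w * cosh r > 0" using w by simp
  ultimately have "\<kappa> = Im w * cosh r" by (metis power2_eq_imp_eq less_imp_le)
  hence im: "Im w = \<kappa> / cosh r" by simp
  have "Re w = \<kappa> * \<sigma> * tanh r" unfolding re im tanh_def by (simp add: algebra_simps)
  thus ?thesis using im by (simp add: complex_eq_iff)
qed

text \<open>The image of the arc of the hypercycle joining the two perpendiculars.\<close>

definition model_arc :: "real \<Rightarrow> real \<Rightarrow> real \<Rightarrow> complex set" where
  "model_arc r \<sigma> \<tau> =
     (\<lambda>\<kappa>. Complex (\<kappa> * \<sigma> * tanh r) (\<kappa> / cosh r)) ` {min 1 (exp \<tau>)..max 1 (exp \<tau>)}"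

lemma connected_model_arc: "connected (model_arc r \<sigma> \<tau>)"
  unfolding model_arc_def by (intro connected_continuous_image continuous_intros) simp_all

lemma model_arcE:
  assumes "w \<in> model_arc r \<sigma> \<tau>"
  obtains \<kappa> where "\<kappa> > 0" "min 1 (exp \<tau>) \<le> \<kappa>" "\<kappa> \<le> max 1 (exp \<tau>)"
    "w = Complex (\<kappa> * \<sigma> * tanh r) (\<kappa> / cosh r)"
proof -
  obtain \<kappa> where \<kappa>: "\<kappa> \<in> {min 1 (exp \<tau>)..max 1 (exp \<tau>)}"
    "w = Complex (\<kappa> * \<sigma> * tanh r) (\<kappa> / cosh r)"
    using assms unfolding model_arc_def by auto
  moreover have "\<kappa> > 0" using \<kappa>(1) less_le_trans[of 0 "min 1 (exp \<tau>)" \<kappa>] by simp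
  ultimately show ?thesis by (intro that[of \<kappa>]) auto
qed

lemma model_arc_subset_model_box:
  assumes "\<sigma> = 1 \<or> \<sigma> = -1" "r \<ge> 0"
  shows "model_arc r \<sigma> \<tau> \<subseteq> model_box r \<sigma> \<tau>"
proof
  fix w assume "w \<in> model_arc r \<sigma> \<tau>"
  then obtain \<kappa> where "\<kappa> > 0" "min 1 (exp \<tau>) \<le> \<kappa>" "\<kappa> \<le> max 1 (exp \<tau>)"
    "w = Complex (\<kappa> * \<sigma> * tanh r) (\<kappa> / cosh r)"
    by (rule model_arcE)
  thus "w \<in> model_box r \<sigma> \<tau>" using ray_circle_point_in_model_box[OF assms(1)] assms(2) by simp
qed

lemma model_arc_on_equidistant:
  assumes "\<sigma> = 1 \<or> \<sigma> = -1" "w \<in> model_arc r \<sigma> \<tau>"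
  shows "Im w > 0" "cmod w = cosh r * Im w"
proof -
  obtain \<kappa> where "\<kappa> > 0" "w = Complex (\<kappa> * \<sigma> * tanh r) (\<kappa> / cosh r)"
    using assms(2) by (rule model_arcE)
  thus "Im w > 0" "cmod w = cosh r * Im w" using norm_ray_circle_point[OF assms(1), of \<kappa> r] by simp_all
qed

lemma connected_UHP_Int_convex: "convex K \<Longrightarrow> connected ({w. Im w > 0} \<inter> K)"
  by (intro convex_connected convex_Int convex_halfspace_Im_gt)

lemma connected_UHP_outside_disc:
  assumes \<rho>: "\<rho> > 0"
  shows "connected {w. Im w > 0 \<and> cmod w > \<rho>}"
proof -
  let ?S = "{w. Im w > 0} \<inter> ball 0 (1 / \<rho>)"
  have inv: "Im (-1 / w) = Im w / (cmod w)^2" "cmod (-1 / w) = 1 / cmod w" for w :: complex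
    by (simp_all add: Im_divide norm_divide cmod_power2)
  have "{w. Im w > 0 \<and> cmod w > \<rho>} = (\<lambda>w. -1 / w) ` ?S"
  proof (intro equalityI subsetI)
    fix z assume z: "z \<in> {w. Im w > 0 \<and> cmod w > \<rho>}"
    hence "1 / cmod z < 1 / \<rho>" using \<rho> by (simp add: frac_less2)
    moreover have "z \<noteq> 0" using z by auto
    ultimately have "-1 / z \<in> ?S" using z inv[of z] by simp
    moreover have "z = -1 / (-1 / z)" by simp
    ultimately show "z \<in> (\<lambda>w. -1 / w) ` ?S" by blast
  next
    fix z assume "z \<in> (\<lambda>w. -1 / w) ` ?S"
    then obtain w where w: "Im w > 0" "cmod w < 1 / \<rho>" and z: "z = -1 / w" by auto
    hence w0: "w \<noteq> 0" by auto
    hence "\<rho> < 1 / cmod w" using w(2) \<rho> by (simp add: field_simps)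
    thus "z \<in> {w. Im w > 0 \<and> cmod w > \<rho>}" using w w0 z inv[of w] by simp
  qed
  moreover have "continuous_on ?S (\<lambda>w. -1 / w)" by (intro continuous_intros) auto
  ultimately show ?thesis
    using connected_continuous_image connected_UHP_Int_convex[OF convex_ball] by metis
qed

lemma not_hbounded_UHP_diff_model_box: "\<not> hbounded (UHP - model_box r \<sigma> \<tau>)"
proof
  assume "hbounded (UHP - model_box r \<sigma> \<tau>)"
  then obtain c R where c: "c \<in> UHP" and bd: "\<And>z. z \<in> UHP - model_box r \<sigma> \<tau> \<Longrightarrow> hdist c z \<le> R"
    unfolding hbounded_def by blast
  have y: "Im c > 0" using c by (simp add: mem_UHP_iff)
  define T where "T = max 1 (exp \<tau>) + 2 * Im c * cosh (\<bar>R\<bar> + 1)"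
  have T: "T > max 1 (exp \<tau>)" "T > 0"
    using y cosh_real_pos[of "\<bar>R\<bar> + 1"] unfolding T_def by (simp_all add: add_pos_pos)
  have out: "\<i> * of_real T \<in> UHP - model_box r \<sigma> \<tau>"
    using T unfolding model_box_def UHP_def by (auto simp: norm_mult)
  have "cosh (\<bar>R\<bar> + 1) \<le> T / (2 * Im c)"
    using y by (simp add: T_def add_divide_distrib)
  also have "\<dots> = T^2 / (2 * Im c * T)" using T by (simp add: power2_eq_square)
  also have "\<dots> \<le> ((cmod c)^2 + T^2) / (2 * Im c * T)" using y T by (intro divide_right_mono) auto
  finally have "arcosh (cosh (\<bar>R\<bar> + 1)) \<le> hdist c (\<i> * of_real T)"
    unfolding hdist_imag[OF c T(2)] by (rule arcosh_real_mono[OF cosh_real_ge_1])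
  hence "\<bar>R\<bar> + 1 \<le> hdist c (\<i> * of_real T)" using arcosh_cosh_real[of "\<bar>R\<bar> + 1"] by simp
  thus False using bd[OF out] by linarith
qed

lemma connected_UHP_diff_model_box:
  assumes sig: "\<sigma> = 1 \<or> \<sigma> = -1"
  shows "connected (UHP - model_box r \<sigma> \<tau>)"
proof -
  define lo hi where "lo = min 1 (exp \<tau>)" and "hi = max 1 (exp \<tau>)"
  have lo: "lo > 0" and hi: "hi > 0" by (auto simp: lo_def hi_def)
  let ?far = "{w. Im w > 0 \<and> cmod w > hi}" and ?near = "{w. Im w > 0} \<inter> ball 0 lo"
  let ?left = "{w. Im w > 0} \<inter> {w. inner (complex_of_real \<sigma>) w < 0}"
  let ?right = "{w. Im w > 0} \<inter> {w. inner (Complex \<sigma> (- sinh r)) w > 0}"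
  have split: "UHP - model_box r \<sigma> \<tau> = ?far \<union> ?left \<union> ?right \<union> ?near"
    unfolding model_box_def UHP_def lo_def hi_def
    by (auto simp: inner_complex_def dist_norm algebra_simps)
  define T where "T = hi + 1"
  have T: "T > hi" "T > 0" using hi by (auto simp: T_def)
  have "Complex (- \<sigma> * T) T \<in> ?far \<inter> ?left"
    using abs_Im_le_cmod[of "Complex (- \<sigma> * T) T"] T sig by (auto simp: inner_complex_def)
  moreover have "Complex (\<sigma> * (sinh r + 1) * T) T \<in> ?far \<inter> ?right"
    using abs_Im_le_cmod[of "Complex (\<sigma> * (sinh r + 1) * T) T"] T sig
    by (auto simp: inner_complex_def algebra_simps)
  moreover have "Complex (- \<sigma> * (lo / 4)) (lo / 4) \<in> ?near \<inter> ?left"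
  proof -
    have "cmod (Complex (- \<sigma> * (lo / 4)) (lo / 4)) \<le> \<bar>- \<sigma> * (lo / 4)\<bar> + \<bar>lo / 4\<bar>"
      using cmod_le[of "Complex (- \<sigma> * (lo / 4)) (lo / 4)"] by simp
    also have "\<dots> = lo / 2" using sig lo by auto
    finally show ?thesis using sig lo by (auto simp: inner_complex_def dist_norm)
  qed
  moreover have "connected ?far" "connected ?left" "connected ?right" "connected ?near"
    using connected_UHP_outside_disc[OF hi]
    by (simp_all add: connected_UHP_Int_convex convex_halfspace_lt convex_halfspace_gt)
  ultimately show ?thesis unfolding split by (intro connected_Un; blast)
qed

section \<open>Diameter of the model box\<close>

lemma tanh_real_le_self:
  assumes "(x::real) \<ge> 0" shows "tanh x \<le> x"
proof -
  have "(\<lambda>t. t - tanh t) 0 \<le> (\<lambda>t. t - tanh t) x"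
  proof (rule DERIV_nonneg_imp_nondecreasing[OF assms])
    fix t :: real
    have d: "(tanh has_real_derivative (1 - tanh t ^ 2)) (at t)"
      using has_field_derivative_tanh[of "\<lambda>x. x" t 1] by (simp add: DERIV_ident)
    have "((\<lambda>t. t - tanh t) has_real_derivative 1 - (1 - tanh t ^ 2)) (at t)"
      by (intro DERIV_diff DERIV_ident d)
    thus "\<exists>y. ((\<lambda>t. t - tanh t) has_real_derivative y) (at t) \<and> 0 \<le> y" by fastforce
  qed
  thus ?thesis by simp
qed

lemma cosh_tanh_le_cosh: "r \<ge> 0 \<Longrightarrow> cosh (tanh r) \<le> cosh (r::real)"
  using tanh_real_le_self[of r] by (simp add: cosh_real_nonneg_le_iff)

lemma cosh_tanh_le_7_4: "r \<ge> 0 \<Longrightarrow> cosh (tanh r) \<le> (7/4::real)"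
proof -
  assume r: "r \<ge> 0"
  have "tanh r \<le> 1" using tanh_real_lt_1[of r] by simp
  hence "cosh (tanh r) \<le> cosh 1" using r by (simp add: cosh_real_nonneg_le_iff)
  also have "cosh (1::real) = (exp 1 + inverse (exp 1)) / 2" by (rule cosh_real_exp)
  also have "\<dots> \<le> (3 + 1/2) / 2"
  proof -
    have "exp (1::real) \<le> 3" by (rule exp_le)
    moreover have "exp (1::real) \<ge> 2" using exp_ge_add_one_self[of 1] by simp
    hence "inverse (exp (1::real)) \<le> inverse 2" by (rule le_imp_inverse_le) simp
    hence "inverse (exp (1::real)) \<le> 1/2" by simp
    ultimately show ?thesis by simp
  qed
  finally show ?thesis by simp
qed

lemma sqrt_one_plus_square_le_chord:
  fixes p q S C :: real
  assumes S: "S > 0" and SC: "S^2 = C^2 - 1" and C: "C \<ge> 1"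
    and p: "0 \<le> p" "p \<le> S" and q: "q \<ge> 0" "q^2 = 1 + p^2"
  shows "q \<le> 1 + p * ((C - 1) / S)"
proof -
  define k where "k = (C - 1) / S"
  have kS: "k * S = C - 1" using S by (simp add: k_def)
  have k: "k \<ge> 0" using C S by (simp add: k_def)
  have e: "S^2 * ((1 + p * k)^2 - q^2) = 2 * p * (C - 1) * (S - p)"
    using kS SC q(2) by algebra
  have "2 * p * (C - 1) * (S - p) \<ge> 0" using p C by simp
  hence "S^2 * ((1 + p * k)^2 - q^2) \<ge> 0" using e by simp
  hence "(1 + p * k)^2 - q^2 \<ge> 0" using S by (simp add: zero_le_mult_iff)
  hence "q^2 \<le> (1 + p * k)^2" by simp
  moreover have "1 + p * k \<ge> 0" using p k by simp
  ultimately show ?thesis unfolding k_def[symmetric] by (rule power2_le_imp_le)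
qed

lemma affine_le_max_endpoints:
  fixes A B x S :: real
  assumes "0 \<le> x" "x \<le> S"
  shows "A + x * B \<le> max A (A + S * B)"
proof (cases "B \<le> 0")
  case True
  thus ?thesis using assms(1) mult_nonneg_nonpos[of x B] by simp
next
  case False
  thus ?thesis using assms mult_right_mono[of x S B] by simp
qed

lemma cosh_tanh_mult_cosh_square_le:
  fixes r :: real
  assumes r: "r \<ge> 0"
  shows "cosh (tanh r) * (cosh r)^2 \<le> 3 * (cosh r)^2 - 2"
proof -
  define C where "C = cosh r"
  have C: "C \<ge> 1" by (simp add: C_def cosh_real_ge_1)
  have "cosh (tanh r) * C^2 \<le> 3 * C^2 - 2"
  proof (cases "C \<le> 2")
    case True
    have "cosh (tanh r) * C^2 \<le> C * C^2"
      using cosh_tanh_le_cosh[OF r] unfolding C_def by (intro mult_right_mono) auto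
    moreover have "C * (C - 2) \<le> 0" using C True by (intro mult_nonneg_nonpos) auto
    hence "(C - 1) * (C * (C - 2) - 2) \<le> 0" using C by (intro mult_nonneg_nonpos) auto
    ultimately show ?thesis by (simp add: power2_eq_square algebra_simps)
  next
    case False
    have "cosh (tanh r) * C^2 \<le> 7/4 * C^2" using cosh_tanh_le_7_4[OF r] by (intro mult_right_mono) auto
    moreover have "2 * 2 \<le> C * C" using False by (intro mult_mono) auto
    ultimately show ?thesis by (simp add: power2_eq_square)
  qed
  thus ?thesis by (simp add: C_def)
qed

lemma model_box_cosh_bound:
  fixes p1 p2 q1 q2 ch r :: real
  assumes r: "r > 0"
    and p1: "0 \<le> p1" "p1 \<le> sinh r" and p2: "0 \<le> p2" "p2 \<le> sinh r"
    and q1: "q1 \<ge> 0" "q1^2 = 1 + p1^2" and q2: "q2 \<ge> 0" "q2^2 = 1 + p2^2"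
    and ch: "ch \<le> cosh (tanh r)"
  shows "ch * q1 * q2 - p1 * p2 \<le> 2 * (cosh r)^2 - 1"
proof -
  define S where "S = sinh r"
  define C where "C = cosh r"
  define cT where "cT = cosh (tanh r)"
  define k where "k = (C - 1) / S"
  have S: "S > 0" using r by (simp add: S_def)
  have C: "C \<ge> 1" by (simp add: C_def cosh_real_ge_1)
  have SC: "S^2 = C^2 - 1" by (simp add: S_def C_def cosh_square_eq)
  have kS: "1 + S * k = C" using S by (simp add: k_def)
  have cT1: "cT \<ge> 1" by (simp add: cT_def cosh_real_ge_1)
  have cTC: "cT \<le> C" using cosh_tanh_le_cosh[of r] r unfolding cT_def C_def by simp
  have c1: "q1 \<le> 1 + p1 * k" "q2 \<le> 1 + p2 * k"
    unfolding k_def using sqrt_one_plus_square_le_chord[OF S SC C] p1 p2 q1 q2 S_def by auto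
  have "q2^2 \<le> C^2" using q2 SC p2 power_mono[of p2 S 2] by (simp add: S_def)
  hence q2C: "q2 \<le> C" using power2_le_imp_le[of q2 C] C by linarith
  have "cT * C \<le> C * C" "1 * 1 \<le> C * C"
    using cTC C by (intro mult_right_mono mult_mono; simp)+
  hence corner1: "cT * C \<le> 2 * C^2 - 1" by (simp add: power2_eq_square)
  have corner2: "cT * C^2 - S^2 \<le> 2 * C^2 - 1"
    using cosh_tanh_mult_cosh_square_le[of r] r SC unfolding cT_def C_def by simp
  have "ch * q1 * q2 \<le> cT * q1 * q2"
    using ch q1 q2 by (intro mult_right_mono) (auto simp: cT_def)
  also have "\<dots> \<le> cT * (1 + p1 * k) * q2"
    using c1(1) cT1 q2 by (intro mult_right_mono mult_left_mono) auto
  finally have "ch * q1 * q2 \<le> cT * (1 + p1 * k) * q2" .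
  hence "ch * q1 * q2 - p1 * p2 \<le> cT * q2 + p1 * (cT * q2 * k - p2)"
    by (simp add: algebra_simps)
  also have "\<dots> \<le> max (cT * q2) (cT * q2 + S * (cT * q2 * k - p2))"
    using affine_le_max_endpoints p1 S_def by simp
  also have "\<dots> \<le> 2 * C^2 - 1"
  proof (rule max.boundedI)
    have "cT * q2 \<le> cT * C" using q2C cT1 by simp
    thus "cT * q2 \<le> 2 * C^2 - 1" using corner1 by linarith
    have "cT * q2 + S * (cT * q2 * k - p2) = cT * q2 * (1 + S * k) - S * p2"
      by (simp add: algebra_simps)
    also have "\<dots> = cT * C * q2 - S * p2" using kS by simp
    also have "\<dots> \<le> cT * C * (1 + p2 * k) - S * p2" using c1(2) cT1 C by simp
    also have "\<dots> = cT * C + p2 * (cT * C * k - S)" by (simp add: algebra_simps)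
    also have "\<dots> \<le> max (cT * C) (cT * C + S * (cT * C * k - S))"
      using affine_le_max_endpoints p2 S_def by simp
    also have "cT * C + S * (cT * C * k - S) = cT * C * (1 + S * k) - S^2"
      by (simp add: algebra_simps power2_eq_square)
    also have "\<dots> = cT * C^2 - S^2" using kS by (simp add: power2_eq_square)
    also have "max (cT * C) (cT * C^2 - S^2) \<le> 2 * C^2 - 1" using corner1 corner2 by simp
    finally show "cT * q2 + S * (cT * q2 * k - p2) \<le> 2 * C^2 - 1" .
  qed
  finally show ?thesis unfolding C_def .
qed

lemma moduli_ratio_cosh_bound:
  fixes lo hi E r1 r2 :: real
  assumes lo: "lo > 0" and E: "E \<ge> 1" and hi: "hi = lo * E"
    and r1: "lo \<le> r1" "r1 \<le> hi" and r2: "lo \<le> r2" "r2 \<le> hi"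
  shows "(r1^2 + r2^2) / (2 * r1 * r2) \<le> (E + inverse E) / 2"
proof -
  have p1: "r1 > 0" "r2 > 0" using lo r1 r2 by auto
  have Ep: "E > 0" using E by simp
  have a: "E * r1 - r2 \<ge> 0"
  proof -
    have "E * lo \<le> E * r1" using r1 Ep by simp
    thus ?thesis using hi r2 by (simp add: mult.commute)
  qed
  have b: "r1 - E * r2 \<le> 0"
  proof -
    have "E * lo \<le> E * r2" using r2 Ep by simp
    thus ?thesis using hi r1 by (simp add: mult.commute)
  qed
  have "(E * r1 - r2) * (r1 - E * r2) \<le> 0" using a b by (rule mult_nonneg_nonpos)
  hence main: "E * (r1^2 + r2^2) \<le> (E^2 + 1) * (r1 * r2)"
    by (simp add: power2_eq_square algebra_simps)
  have "(r1^2 + r2^2) / (2 * r1 * r2) = (E * (r1^2 + r2^2)) / (E * (2 * r1 * r2))"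
    using Ep by simp
  also have "\<dots> \<le> ((E^2 + 1) * (r1 * r2)) / (E * (2 * r1 * r2))"
    using main Ep p1 by (intro divide_right_mono) auto
  also have "\<dots> = (E^2 + 1) / (2 * E)" using p1 Ep by (simp add: field_simps)
  also have "\<dots> = (E + inverse E) / 2" using Ep by (simp add: field_simps power2_eq_square)
  finally show ?thesis .
qed

lemma cosh_hdist_polar:
  fixes x1 y1 x2 y2 r1 r2 \<sigma> :: real
  assumes y: "y1 > 0" "y2 > 0" and r: "r1 > 0" "r2 > 0"
    and rr: "r1^2 = x1^2 + y1^2" "r2^2 = x2^2 + y2^2" and ss: "\<sigma> * \<sigma> = 1"
  shows "1 + ((x1 - x2)^2 + (y1 - y2)^2) / (2 * y1 * y2)
     = ((r1^2 + r2^2) / (2 * r1 * r2)) * (r1 / y1) * (r2 / y2) - (\<sigma> * x1 / y1) * (\<sigma> * x2 / y2)"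
proof -
  have s1: "((r1^2 + r2^2) / (2 * r1 * r2)) * (r1 / y1) * (r2 / y2) = (r1^2 + r2^2) / (2 * y1 * y2)"
    using r y by (simp add: field_simps)
  have s2: "(\<sigma> * x1 / y1) * (\<sigma> * x2 / y2) = (\<sigma> * \<sigma>) * (x1 * x2) / (y1 * y2)"
    by (simp add: algebra_simps)
  have s3: "1 + ((x1 - x2)^2 + (y1 - y2)^2) / (2 * y1 * y2) = (x1^2 + y1^2 + (x2^2 + y2^2)) / (2 * y1 * y2) - (x1 * x2) / (y1 * y2)"
    using y by (simp add: field_simps power2_eq_square)
  show ?thesis unfolding s1 s2 s3 ss rr using r y by simp
qed

lemma model_box_slope:
  assumes sig: "\<sigma> = 1 \<or> \<sigma> = -1" and z: "z \<in> model_box r \<sigma> \<tau>"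
  shows "0 \<le> \<sigma> * Re z / Im z" "\<sigma> * Re z / Im z \<le> sinh r"
    "(cmod z / Im z)^2 = 1 + (\<sigma> * Re z / Im z)^2"
proof -
  have y: "Im z > 0" "0 \<le> \<sigma> * Re z" "\<sigma> * Re z \<le> sinh r * Im z"
    using z unfolding model_box_def by auto
  thus "0 \<le> \<sigma> * Re z / Im z" "\<sigma> * Re z / Im z \<le> sinh r" by (simp_all add: divide_le_eq)
  have "\<sigma>^2 = 1" using sig by auto
  thus "(cmod z / Im z)^2 = 1 + (\<sigma> * Re z / Im z)^2"
    using y(1) by (simp add: cmod_power2 power_divide power_mult_distrib field_simps)
qed

lemma model_box_hdist_le:
  assumes r: "r > 0" and sig: "\<sigma> = 1 \<or> \<sigma> = -1" and tau: "\<bar>\<tau>\<bar> = tanh r"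
    and z: "z \<in> model_box r \<sigma> \<tau>" and w: "w \<in> model_box r \<sigma> \<tau>"
  shows "hdist z w \<le> 2 * r"
proof -
  define E where "E = exp (tanh r)"
  have hi: "max 1 (exp \<tau>) = min 1 (exp \<tau>) * E"
  proof (cases "\<tau> \<ge> 0")
    case True thus ?thesis using tau by (simp add: E_def)
  next
    case False
    hence "tanh r = - \<tau>" using tau by simp
    thus ?thesis using False by (simp add: E_def exp_minus)
  qed
  have zz: "Im z > 0" "min 1 (exp \<tau>) \<le> cmod z" "cmod z \<le> max 1 (exp \<tau>)"
    and ww: "Im w > 0" "min 1 (exp \<tau>) \<le> cmod w" "cmod w \<le> max 1 (exp \<tau>)"
    using z w unfolding model_box_def by auto
  have zU: "z \<in> UHP" and wU: "w \<in> UHP" using zz ww by (simp_all add: mem_UHP_iff)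
  have rz: "cmod z > 0" "cmod w > 0" using zz ww by auto
  have ss: "\<sigma> * \<sigma> = 1" using sig by auto
  define ch where "ch = ((cmod z)^2 + (cmod w)^2) / (2 * cmod z * cmod w)"
  have ch: "ch \<le> cosh (tanh r)"
    unfolding ch_def cosh_real_exp E_def[symmetric]
    by (rule moduli_ratio_cosh_bound[OF _ _ hi zz(2,3) ww(2,3)]) (use r in \<open>simp_all add: E_def\<close>)
  have "cosh (hdist z w) = 1 + ((Re z - Re w)^2 + (Im z - Im w)^2) / (2 * Im z * Im w)"
    by (simp add: cosh_hdist[OF zU wU] cmod_power2)
  also have "\<dots> = ch * (cmod z / Im z) * (cmod w / Im w) - (\<sigma> * Re z / Im z) * (\<sigma> * Re w / Im w)"
    unfolding ch_def by (rule cosh_hdist_polar[OF zz(1) ww(1) rz]) (simp_all add: cmod_power2 ss)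
  also have "\<dots> \<le> 2 * (cosh r)^2 - 1"
    using model_box_slope[OF sig z] model_box_slope[OF sig w] zz(1) ww(1)
    by (intro model_box_cosh_bound[OF r _ _ _ _ _ _ _ _ ch]) auto
  also have "\<dots> = cosh (2 * r)" by (simp add: cosh_double_cosh)
  finally show ?thesis using r by (intro hdist_le_if_cosh_le[OF zU wU]) auto
qed

section \<open>Transport to normalized coordinates\<close>

lemma region_bounded_by_subset:
  assumes JK: "J \<subseteq> K" and conn: "connected (UHP - K)" and unbounded: "\<not> hbounded (UHP - K)"
  shows "region_bounded_by J \<subseteq> K"
proof
  fix x assume "x \<in> region_bounded_by J"
  then consider "x \<in> J" | C where "C \<in> components (UHP - J)" "hbounded C" "x \<in> C"
    unfolding region_bounded_by_def by blast
  thus "x \<in> K"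
  proof cases
    case 2
    show ?thesis
    proof (rule ccontr)
      assume "x \<notin> K"
      moreover have "x \<in> UHP" using 2 in_components_subset by blast
      ultimately have "UHP - K \<subseteq> C"
        using components_maximal[OF 2(1) conn] JK 2(3) by blast
      hence "hbounded (UHP - K)" using 2(2) unfolding hbounded_def by blast
      thus False using unbounded by simp
    qed
  qed (use JK in blast)
qed

lemma hypercycle_subset_UHP: "hypercycle \<gamma> r H \<Longrightarrow> H \<subseteq> UHP"
  unfolding hypercycle_def using in_components_subset by blast

lemma equidistant_Re_square:
  assumes "cmod w = cosh r * Im w"
  shows "(Re w)^2 = (sinh r * Im w)^2"
proof -
  have "(Re w)^2 + (Im w)^2 = (cosh r)^2 * (Im w)^2"
    using assms by (metis cmod_power2 power_mult_distrib)
  thus ?thesis by (simp add: cosh_square_eq power_mult_distrib algebra_simps)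
qed

lemma connected_sign_Re:
  assumes conn: "connected S" and nonzero: "\<And>w. w \<in> S \<Longrightarrow> Re w \<noteq> 0"
  obtains \<sigma> :: real where "\<sigma> = 1 \<or> \<sigma> = -1" "\<And>w. w \<in> S \<Longrightarrow> \<sigma> * Re w > 0"
proof -
  have "S \<subseteq> {w. Re w > 0} \<union> {w. Re w < 0}" using nonzero by fastforce
  hence "{w. Re w > 0} \<inter> S = {} \<or> {w. Re w < 0} \<inter> S = {}"
    by (intro connectedD[OF conn open_halfspace_Re_gt open_halfspace_Re_lt]) auto
  hence "(\<forall>w\<in>S. Re w < 0) \<or> (\<forall>w\<in>S. Re w > 0)"
    using nonzero by (metis disjoint_iff linorder_neqE_linordered_idom mem_Collect_eq)
  thus ?thesis using that[of "-1"] that[of 1] by auto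
qed

locale normalized_line =
  fixes \<gamma> :: "real \<Rightarrow> complex" and p q s t t0 :: real
  assumes geodesic: "geodesic_line \<gamma>"
    and det_pos: "p * t - q * s > 0"
    and line_to_imag_axis: "\<And>u. real_moebius p q s t (\<gamma> u) = \<i> * of_real (exp (u - t0))"
begin

abbreviation M :: "complex \<Rightarrow> complex" where "M \<equiv> real_moebius p q s t"

text \<open>A definition rather than an abbreviation: the simplifier would otherwise rewrite
  \<open>of_real (-q)\<close> inside it and the inverse laws would no longer match.\<close>

definition M_inv :: "complex \<Rightarrow> complex" where "M_inv = real_moebius t (-q) (-s) p"

lemma det_inv_pos: "t * p - (-q) * (-s) > 0"
  using det_pos by (simp add: mult.commute)

lemma M_in_UHP: "z \<in> UHP \<Longrightarrow> M z \<in> UHP"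
  using real_moebius_in_UHP[OF _ det_pos] .

lemma M_inv_in_UHP: "z \<in> UHP \<Longrightarrow> M_inv z \<in> UHP"
  unfolding M_inv_def using real_moebius_in_UHP[OF _ det_inv_pos] .

lemma M_inv_M: "z \<in> UHP \<Longrightarrow> M_inv (M z) = z"
  unfolding M_inv_def using real_moebius_left_inverse det_pos by (simp add: mem_UHP_iff)

lemma M_M_inv: "z \<in> UHP \<Longrightarrow> M (M_inv z) = z"
  unfolding M_inv_def using real_moebius_right_inverse det_pos by (simp add: mem_UHP_iff)

lemma continuous_on_M: "continuous_on UHP M"
  by (rule continuous_on_real_moebius) (use det_pos in linarith)

lemma continuous_on_M_inv: "continuous_on UHP M_inv"
  unfolding M_inv_def by (rule continuous_on_real_moebius) (use det_inv_pos in linarith)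

lemma hdist_M: "z \<in> UHP \<Longrightarrow> w \<in> UHP \<Longrightarrow> hdist (M z) (M w) = hdist z w"
  using hdist_real_moebius[OF _ _ det_pos] .

lemma hdist_set_line_eq_iff:
  assumes z: "z \<in> UHP" and r: "r > 0"
  shows "hdist_set z (range \<gamma>) = r \<longleftrightarrow> cmod (M z) = cosh r * Im (M z)"
proof -
  have "hdist_set z (range \<gamma>) = Inf (range (\<lambda>u. hdist (M z) (\<i> * of_real (exp (u - t0)))))"
    unfolding hdist_set_def image_image
    using hdist_M[OF z geodesic_line_in_UHP[OF geodesic]] line_to_imag_axis by simp
  also have "\<dots> = arcosh (cmod (M z) / Im (M z))" by (rule Inf_hdist_imag_axis[OF M_in_UHP[OF z]])
  finally have "hdist_set z (range \<gamma>) = arcosh (cmod (M z) / Im (M z))" .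
  moreover have y: "Im (M z) > 0" using M_in_UHP[OF z] by (simp add: mem_UHP_iff)
  moreover have "cmod (M z) / Im (M z) \<ge> 1" using y abs_Im_le_cmod[of "M z"] by simp
  ultimately show ?thesis using arcosh_real_eq_iff r by (simp add: field_simps)
qed

lemma hypercycle_on_ray:
  assumes r: "r > 0" and H: "hypercycle \<gamma> r H"
  obtains \<sigma> where "\<sigma> = 1 \<or> \<sigma> = -1" "\<And>h. h \<in> H \<Longrightarrow> Re (M h) = \<sigma> * sinh r * Im (M h)"
proof -
  have HE: "H \<in> components {p \<in> UHP. hdist_set p (range \<gamma>) = r}"
    using H unfolding hypercycle_def .
  have Re_sq: "(Re (M h))^2 = (sinh r * Im (M h))^2" and pos: "sinh r * Im (M h) > 0"
    if "h \<in> H" for h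
  proof -
    have "h \<in> UHP" "hdist_set h (range \<gamma>) = r" using in_components_subset[OF HE] that by auto
    thus "(Re (M h))^2 = (sinh r * Im (M h))^2" "sinh r * Im (M h) > 0"
      using hdist_set_line_eq_iff[OF _ r] M_in_UHP equidistant_Re_square r by (auto simp: mem_UHP_iff)
  qed
  have "connected (M ` H)"
    using connected_continuous_image[OF continuous_on_subset[OF continuous_on_M
      hypercycle_subset_UHP[OF H]] in_components_connected[OF HE]] .
  moreover have "Re w \<noteq> 0" if "w \<in> M ` H" for w
    using that Re_sq pos by fastforce
  ultimately obtain \<sigma> where sig: "\<sigma> = 1 \<or> \<sigma> = -1" and sign: "\<And>w. w \<in> M ` H \<Longrightarrow> \<sigma> * Re w > 0"
    by (rule connected_sign_Re) blast+
  have "Re (M h) = \<sigma> * sinh r * Im (M h)" if "h \<in> H" for h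
    using Re_sq[OF that] sign[OF imageI[OF that]] pos[OF that] sig by (auto simp: power2_eq_iff)
  with sig show ?thesis using that by blast
qed

lemma perp_segment_norm_eq:
  assumes perp: "perp_segment B A \<gamma>" and A: "A \<in> UHP"
  shows "cmod (M A) = cmod (M B)"
proof -
  obtain \<sigma> t1 u v where d: "hdist B A > 0" and sU: "\<sigma> ` {0..hdist B A} \<subseteq> UHP"
    and iso: "\<forall>s\<in>{0..hdist B A}. \<forall>t\<in>{0..hdist B A}. hdist (\<sigma> s) (\<sigma> t) = \<bar>s - t\<bar>"
    and s0: "\<sigma> 0 = B" and sd: "\<sigma> (hdist B A) = A" and t1: "\<gamma> t1 = B"
    and du: "(\<sigma> has_vector_derivative u) (at 0 within {0..hdist B A})"
    and dv: "(\<gamma> has_vector_derivative v) (at t1)" and orth: "Re (u * cnj v) = 0"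
    using perp unfolding perp_segment_def by blast
  define \<beta> where "\<beta> = exp (t1 - t0)"
  have \<beta>: "\<beta> > 0" by (simp add: \<beta>_def)
  have BU: "B \<in> UHP" using t1 geodesic_line_in_UHP[OF geodesic] by auto
  have MB: "M B = \<i> * of_real \<beta>" using line_to_imag_axis[of t1] t1 by (simp add: \<beta>_def)
  have BI: "Im B > 0" and det: "p * t - q * s \<noteq> 0" using BU det_pos by (auto simp: mem_UHP_iff)
  obtain u' v' where du': "((M \<circ> \<sigma>) has_vector_derivative u') (at 0 within {0..hdist B A})"
    and dv': "((M \<circ> \<gamma>) has_vector_derivative v') (at t1)" and orth': "Re (u' * cnj v') = 0"
    using real_moebius_preserves_orthogonality[OF BI det du s0 dv t1 orth] .
  have "M \<circ> \<gamma> = (\<lambda>x. \<i> * of_real (exp (x - t0)))" using line_to_imag_axis by (simp add: o_def)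
  hence "((M \<circ> \<gamma>) has_vector_derivative \<i> * of_real \<beta>) (at t1)"
    using imag_exp_has_vector_derivative[of t0 t1 UNIV] unfolding \<beta>_def by simp
  hence v': "v' = \<i> * of_real \<beta>" by (rule vector_derivative_unique_at[OF dv'])
  have "cmod (M A) = \<beta>"
  proof (rule perp_segment_imag_axis_norm[OF \<beta> M_in_UHP[OF A] _ d _ _ _ _ du'])
    show "hdist B A = hdist (\<i> * of_real \<beta>) (M A)" using hdist_M[OF BU A] MB by simp
    show "(M \<circ> \<sigma>) ` {0..hdist B A} \<subseteq> UHP" using sU M_in_UHP by auto
    show "\<forall>s\<in>{0..hdist B A}. \<forall>t\<in>{0..hdist B A}. hdist ((M \<circ> \<sigma>) s) ((M \<circ> \<sigma>) t) = \<bar>s - t\<bar>"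
    proof (intro ballI)
      fix x y assume "x \<in> {0..hdist B A}" "y \<in> {0..hdist B A}"
      moreover from this have "\<sigma> x \<in> UHP" "\<sigma> y \<in> UHP" using sU by auto
      ultimately show "hdist ((M \<circ> \<sigma>) x) ((M \<circ> \<sigma>) y) = \<bar>x - y\<bar>" using iso hdist_M by simp
    qed
    show "(M \<circ> \<sigma>) 0 = \<i> * of_real \<beta>" using s0 MB by simp
    show "(M \<circ> \<sigma>) (hdist B A) = M A" using sd by simp
    show "Re (u' * cnj (\<i> * of_real \<beta>)) = 0" using orth' v' by simp
  qed
  thus ?thesis using MB \<beta> by (simp add: norm_mult)
qed

lemma perp_foot_on_ray:
  assumes perp: "perp_segment B A \<gamma>" and A: "A \<in> UHP"
    and sig: "\<sigma> = 1 \<or> \<sigma> = -1" and ray: "Re (M A) = \<sigma> * sinh r * Im (M A)"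
  shows "M A = Complex (cmod (M B) * \<sigma> * tanh r) (cmod (M B) / cosh r)"
proof (rule eq_ray_point[OF sig _ ray])
  show "Im (M A) > 0" using M_in_UHP[OF A] by (simp add: mem_UHP_iff)
  show "cmod (M A) = cmod (M B)" by (rule perp_segment_norm_eq[OF perp A])
qed

lemma curve_arc_subset_model_box:
  assumes r: "r > 0" and H: "hypercycle \<gamma> r H" and sig: "\<sigma> = 1 \<or> \<sigma> = -1"
    and a: "a \<in> H" "a' \<in> H" and Ma: "M a \<in> model_arc r \<sigma> \<tau>" "M a' \<in> model_arc r \<sigma> \<tau>"
  shows "curve_arc H a' a \<subseteq> {z \<in> UHP. M z \<in> model_box r \<sigma> \<tau>}"
proof -
  define X where "X = M_inv ` model_arc r \<sigma> \<tau>"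
  have HE: "H \<in> components {p \<in> UHP. hdist_set p (range \<gamma>) = r}"
    using H unfolding hypercycle_def .
  have arcU: "model_arc r \<sigma> \<tau> \<subseteq> UHP"
    using model_arc_on_equidistant(1)[OF sig] by (auto simp: mem_UHP_iff)
  have X: "z \<in> UHP \<and> cmod (M z) = cosh r * Im (M z) \<and> M z \<in> model_box r \<sigma> \<tau>" if "z \<in> X" for z
  proof -
    obtain w where w: "w \<in> model_arc r \<sigma> \<tau>" "z = M_inv w" using \<open>z \<in> X\<close> unfolding X_def by blast
    have wU: "w \<in> UHP" using w(1) arcU by blast
    show ?thesis
      using model_arc_on_equidistant(2)[OF sig w(1)] model_arc_subset_model_box[OF sig, of r \<tau>]
        M_inv_in_UHP[OF wU] M_M_inv[OF wU] w r by auto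
  qed
  have "connected X" unfolding X_def
    by (rule connected_continuous_image[OF continuous_on_subset[OF continuous_on_M_inv arcU]
      connected_model_arc])
  moreover have "X \<subseteq> {p \<in> UHP. hdist_set p (range \<gamma>) = r}"
    using X hdist_set_line_eq_iff[OF _ r] by blast
  moreover have "a = M_inv (M a)" "a' = M_inv (M a')"
    using M_inv_M a hypercycle_subset_UHP[OF H] by auto
  hence "a \<in> X" "a' \<in> X" unfolding X_def using Ma by blast+
  ultimately have "X \<subseteq> H" using components_maximal[OF HE] a(1) by blast
  hence "curve_arc H a' a \<subseteq> X"
    unfolding curve_arc_def using \<open>connected X\<close> \<open>a \<in> X\<close> \<open>a' \<in> X\<close> by blast
  thus ?thesis using X by blast
qed

lemma region_bounded_by_subset_model_box:
  assumes r: "r > 0" and sig: "\<sigma> = 1 \<or> \<sigma> = -1" and J: "J \<subseteq> {z \<in> UHP. M z \<in> model_box r \<sigma> \<tau>}"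
  shows "region_bounded_by J \<subseteq> {z \<in> UHP. M z \<in> model_box r \<sigma> \<tau>}"
proof (rule region_bounded_by_subset[OF J])
  have outside: "UHP - {z \<in> UHP. M z \<in> model_box r \<sigma> \<tau>} = M_inv ` (UHP - model_box r \<sigma> \<tau>)"
  proof
    show "UHP - {z \<in> UHP. M z \<in> model_box r \<sigma> \<tau>} \<subseteq> M_inv ` (UHP - model_box r \<sigma> \<tau>)"
    proof
      fix z assume "z \<in> UHP - {z \<in> UHP. M z \<in> model_box r \<sigma> \<tau>}"
      hence "M z \<in> UHP - model_box r \<sigma> \<tau>" "z = M_inv (M z)" using M_in_UHP M_inv_M by auto
      thus "z \<in> M_inv ` (UHP - model_box r \<sigma> \<tau>)" by blast
    qed
    show "M_inv ` (UHP - model_box r \<sigma> \<tau>) \<subseteq> UHP - {z \<in> UHP. M z \<in> model_box r \<sigma> \<tau>}"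
      using M_inv_in_UHP M_M_inv by auto
  qed
  show "connected (UHP - {z \<in> UHP. M z \<in> model_box r \<sigma> \<tau>})"
    unfolding outside
    by (rule connected_continuous_image[OF continuous_on_subset[OF continuous_on_M_inv]
      connected_UHP_diff_model_box[OF sig]]) blast
  show "\<not> hbounded (UHP - {z \<in> UHP. M z \<in> model_box r \<sigma> \<tau>})"
  proof
    assume "hbounded (UHP - {z \<in> UHP. M z \<in> model_box r \<sigma> \<tau>})"
    then obtain c R where c: "c \<in> UHP"
      and bd: "\<And>w. w \<in> UHP - model_box r \<sigma> \<tau> \<Longrightarrow> hdist c (M_inv w) \<le> R"
      unfolding hbounded_def outside by blast
    have "hdist (M c) w \<le> R" if w: "w \<in> UHP - model_box r \<sigma> \<tau>" for w
    proof -
      have "w \<in> UHP" using w by blast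
      thus ?thesis using bd[OF w] hdist_M[OF c M_inv_in_UHP] M_M_inv by simp
    qed
    hence "hbounded (UHP - model_box r \<sigma> \<tau>)" unfolding hbounded_def using M_in_UHP[OF c] by blast
    thus False using not_hbounded_UHP_diff_model_box by blast
  qed
qed

lemma hbox_subset_model_box:
  assumes r: "r > 0" and sig: "\<sigma> = 1 \<or> \<sigma> = -1" and tau: "\<bar>\<tau>\<bar> = tanh r"
    and H: "hypercycle \<gamma> r H" and a: "a \<in> H" "a' \<in> H" and b: "b \<in> UHP" "b' \<in> UHP"
    and Mb: "M b = \<i>" "M b' = \<i> * of_real (exp \<tau>)"
    and Ma: "M a = Complex (\<sigma> * tanh r) (1 / cosh r)"
      "M a' = Complex (exp \<tau> * \<sigma> * tanh r) (exp \<tau> / cosh r)"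
  shows "hbox a b b' a' H \<subseteq> {z \<in> UHP. M z \<in> model_box r \<sigma> \<tau>}"
proof -
  let ?K = "{z \<in> UHP. M z \<in> model_box r \<sigma> \<tau>}"
  have aU: "a \<in> UHP" "a' \<in> UHP" using a hypercycle_subset_UHP[OF H] by auto
  have bounds: "min 1 (exp \<tau>) \<le> 1" "1 \<le> max 1 (exp \<tau>)"
    "min 1 (exp \<tau>) \<le> exp \<tau>" "exp \<tau> \<le> max 1 (exp \<tau>)" by auto
  have transport: "hsegment x y \<subseteq> ?K"
    if "x \<in> UHP" "y \<in> UHP" "hsegment (M x) (M y) \<subseteq> model_box r \<sigma> \<tau>" for x y
  proof
    fix z assume z: "z \<in> hsegment x y"
    hence "z \<in> UHP" by (simp add: hsegment_def)
    moreover have "M z \<in> model_box r \<sigma> \<tau>"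
      using real_moebius_hsegment[OF det_pos that(1,2) z] that(3) by blast
    ultimately show "z \<in> ?K" by blast
  qed
  have "hsegment a b \<subseteq> ?K"
  proof (rule transport[OF aU(1) b(1)])
    have "hsegment (M b) (M a) \<subseteq> model_box r \<sigma> \<tau>"
      using hsegment_perp_subset_model_box[OF r sig zero_less_one bounds(1,2)] Ma(1) Mb(1) by simp
    thus "hsegment (M a) (M b) \<subseteq> model_box r \<sigma> \<tau>" by (metis hsegment_commute)
  qed
  moreover have "hsegment b b' \<subseteq> ?K"
    by (rule transport[OF b]) (use hsegment_axis_subset_model_box[OF r tau] Mb in simp)
  moreover have "hsegment b' a' \<subseteq> ?K"
    by (rule transport[OF b(2) aU(2)])
      (use hsegment_perp_subset_model_box[OF r sig exp_gt_zero bounds(3,4)] Ma(2) Mb(2) in simp)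
  moreover have "M a \<in> model_arc r \<sigma> \<tau>" "M a' \<in> model_arc r \<sigma> \<tau>"
    unfolding model_arc_def Ma using bounds by (auto intro: image_eqI[where x=1] image_eqI[where x="exp \<tau>"])
  hence "curve_arc H a' a \<subseteq> ?K" by (rule curve_arc_subset_model_box[OF r H sig a])
  ultimately show ?thesis
    unfolding hbox_def by (intro region_bounded_by_subset_model_box[OF r sig]) blast
qed

end

lemma geodesic_line_normalized:
  assumes g: "geodesic_line \<gamma>"
  obtains p q s t where "normalized_line \<gamma> p q s t t0"
proof -
  have "\<gamma> t0 \<in> UHP" "\<gamma> (t0 + 1) \<in> UHP" using geodesic_line_in_UHP[OF g] by auto
  moreover have "hdist (\<gamma> t0) (\<gamma> (t0 + 1)) = 1" using geodesic_line_hdist[OF g] by simp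
  ultimately obtain p q s t where det: "p * t - q * s > 0"
    and m0: "real_moebius p q s t (\<gamma> t0) = \<i>"
    and m1: "real_moebius p q s t (\<gamma> (t0 + 1)) = \<i> * of_real (exp 1)"
    using real_moebius_normalize_pair by fastforce
  have "normalized_line \<gamma> p q s t t0"
    by unfold_locales (use g det geodesic_line_moebius_image[OF g det m0 m1] in auto)
  thus ?thesis using that by blast
qed

theorem lemma8:
  fixes r :: real and \<gamma> :: "real \<Rightarrow> complex" and H :: "complex set"
    and a a' b b' :: complex
  assumes "r > 0"
    and "geodesic_line \<gamma>"
    and "hypercycle \<gamma> r H"
    and "b \<in> range \<gamma>" and "b' \<in> range \<gamma>"
    and "hdist b b' = tanh r"
    and "a \<in> H" and "a' \<in> H"
    and "perp_segment b a \<gamma>" and "perp_segment b' a' \<gamma>"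
  shows "\<forall>x\<in>hbox a b b' a' H. \<forall>y\<in>hbox a b b' a' H. hdist x y \<le> 2 * r"
proof -
  obtain tb tb' where b: "b = \<gamma> tb" and b': "b' = \<gamma> tb'" using assms(4,5) by blast
  obtain p q s t where "normalized_line \<gamma> p q s t tb"
    using geodesic_line_normalized[OF assms(2)] .
  then interpret normalized_line \<gamma> p q s t tb .
  define \<tau> where "\<tau> = tb' - tb"
  have tau: "\<bar>\<tau>\<bar> = tanh r"
    using assms(6) geodesic_line_hdist[OF geodesic, of tb tb'] b b' by (simp add: \<tau>_def abs_minus_commute)
  have Mb: "M b = \<i>" and Mb': "M b' = \<i> * of_real (exp \<tau>)"
    using line_to_imag_axis[of tb] line_to_imag_axis[of tb'] b b' by (simp_all add: \<tau>_def)
  obtain \<sigma> where sig: "\<sigma> = 1 \<or> \<sigma> = -1" and ray: "\<And>h. h \<in> H \<Longrightarrow> Re (M h) = \<sigma> * sinh r * Im (M h)"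
    using hypercycle_on_ray[OF assms(1,3)] by blast
  have HU: "H \<subseteq> UHP" using hypercycle_subset_UHP[OF assms(3)] .
  have Ma: "M a = Complex (\<sigma> * tanh r) (1 / cosh r)"
    using perp_foot_on_ray[OF assms(9) _ sig ray[OF assms(7)]] assms(7) HU Mb by (simp add: subset_iff)
  have Ma': "M a' = Complex (exp \<tau> * \<sigma> * tanh r) (exp \<tau> / cosh r)"
    using perp_foot_on_ray[OF assms(10) _ sig ray[OF assms(8)]] assms(8) HU Mb'
    by (simp add: subset_iff norm_mult)
  have box: "hbox a b b' a' H \<subseteq> {z \<in> UHP. M z \<in> model_box r \<sigma> \<tau>}"
    using hbox_subset_model_box[OF assms(1) sig tau assms(3,7,8) _ _ Mb Mb' Ma Ma'] b b'
      geodesic_line_in_UHP[OF geodesic] by blast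
  show ?thesis
  proof (intro ballI)
    fix x y assume "x \<in> hbox a b b' a' H" "y \<in> hbox a b b' a' H"
    hence "x \<in> UHP" "y \<in> UHP" "M x \<in> model_box r \<sigma> \<tau>" "M y \<in> model_box r \<sigma> \<tau>"
      using box by auto
    thus "hdist x y \<le> 2 * r" using model_box_hdist_le[OF assms(1) sig tau] hdist_M by metis
  qed
qed

end
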